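(* Under the standing setup in the context, let $\gamma_k=\gamma_0(1+\delta k)^{-3/4}$ and $\eta_k=\eta_0(1+\delta k)^{-1}$ with $\gamma_0,\eta_0>0$ and $0<\delta\le\frac45\mu\eta_0$, and let $\bar\kappa\ge0$ be an integer such that for all $k\ge\bar\kappa$: $\eta_k(\mu+L)+\gamma_k\rho_N\le2$ and $\frac{\eta_k}{\gamma_k}\le\frac{\zeta\mu\rho_2}{\sqrt N\nabla^*L}$. Writing $\mathbf W_k=[\mathbf w_{1k}^\top,\dots,\mathbf w_{Nk}^\top]^\top$, there is a constant $C<\infty$ (independent of $k$) such that for all $k\ge\bar\kappa$, $$\mathbb E\Big[\frac1N\sum_{i=1}^N\|\mathbf w_{ik}-\mathbf w^*\|^2\Big]\le \frac{C}{\sqrt{k+1}}.$$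
   Context: Standing setup. Let $N\ge2$, $d\ge1$. For $i=1,\dots,N$, $f_i:\mathbb R^d\to\mathbb R$ is $\mu$-strongly convex and $L$-smooth (gradient $L$-Lipschitz), $0<\mu\le L$. Let $F(\mathbf w)=\frac1N\sum_i f_i(\mathbf w)$ with unique minimizer $\mathbf w^*\in\mathbb R^d$. Let $\mathcal W\subset\mathbb R^d$ be nonempty, closed, convex, bounded with $\mathbf w^*\in\mathrm{int}(\mathcal W)$; $\zeta\triangleq\min_{\mathbf w\in\mathrm{bd}(\mathcal W)}\|\mathbf w-\mathbf w^*\|>0$; $\nabla^*\triangleq\max_i\|\nabla f_i(\mathbf w^* )\|$. Let $\mathbf L\in\mathbb R^{N\times N}$ be a Laplacian matrix: symmetric, off-diagonal entries $\le0$, $\mathbf L\mathbf 1_N=\mathbf 0$; its eigenvalues are $0=\rho_1\le\rho_2\le\dots\le\rho_N$, and $\rho_2>0$. Set $\hat{\mathbf L}=\mathbf L\otimes\mathbf I_d$. For $\mathbf W=[\mathbf w_1^\top,\dots,\mathbf w_N^\top]^\top\in\mathbb R^{Nd}$ let $f(\mathbf W)=\sum_i f_i(\mathbf w_i)$. $\Pi^N$ denotes Euclidean projection onto $\mathcal W^N$. Given stepsizes $\eta_k,\gamma_k>0$, define $G_k(\mathbf W)=f(\mathbf W)+\frac{\gamma_k}{2\eta_k}\mathbf W^\top\hat{\mathbf L}\mathbf W$. On a probability space with filtration $(\mathcal F_k)$, fix an $\mathcal F_{\bar\kappa}$-measurable $\mathbf W_{\bar\kappa}\in\mathcal W^N$,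 and define for $k\ge\bar\kappa$ $$\mathbf W_{k+1}=\Pi^N\big[\mathbf W_k-\eta_k\nabla G_k(\mathbf W_k)+\gamma_k\boldsymbol\epsilon_k^{(1)}-\eta_k\boldsymbol\epsilon_k^{(2)}\big],$$ where $\boldsymbol\epsilon_k^{(1)},\boldsymbol\epsilon_k^{(2)}\in\mathbb R^{Nd}$ are $\mathcal F_{k+1}$-measurable with $\mathbb E[\boldsymbol\epsilon_k^{(1)}|\mathcal F_k]=\mathbb E[\boldsymbol\epsilon_k^{(2)}|\mathcal F_k]=\mathbf 0$, $\mathbb E[\langle\boldsymbol\epsilon_k^{(1)},\boldsymbol\epsilon_k^{(2)}\rangle|\mathcal F_k]=0$, and $\frac1N\mathbb E[\|\boldsymbol\epsilon_k^{(1)}\|^2|\mathcal F_k]\le\Sigma^{(1)}$, $\frac1N\mathbb E[\|\boldsymbol\epsilon_k^{(2)}\|^2|\mathcal F_k]\le\Sigma^{(2)}$ for constants $\Sigma^{(1)},\Sigma^{(2)}\ge0$. *)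

theory Defs
  imports "HOL-Analysis.Analysis" "HOL-Probability.Probability"
begin

definition strongly_convex :: "real \<Rightarrow> ('a::real_inner \<Rightarrow> real) \<Rightarrow> bool" where
  "strongly_convex \<mu> g \<longleftrightarrow> (\<forall>x y t. 0 \<le> t \<and> t \<le> 1 \<longrightarrow>
      g (t *\<^sub>R x + (1 - t) *\<^sub>R y) \<le> t * g x + (1 - t) * g y - \<mu> / 2 * t * (1 - t) * (norm (x - y))\<^sup>2)"

definition smooth_with_grad :: "real \<Rightarrow> ('a::real_inner \<Rightarrow> real) \<Rightarrow> ('a \<Rightarrow> 'a) \<Rightarrow> bool" where
  "smooth_with_grad L g dg \<longleftrightarrow> (\<forall>x. GDERIV g x :> dg x) \<and> L-lipschitz_on UNIV dg"

definition laplacian_matrix :: "real^'n^'n \<Rightarrow> bool" where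
  "laplacian_matrix Lm \<longleftrightarrow> transpose Lm = Lm \<and> (\<forall>i j. i \<noteq> j \<longrightarrow> Lm $ i $ j \<le> 0)
     \<and> Lm *v (1 :: real^'n) = 0"

(* rho 1 <= ... <= rho N are the eigenvalues of the symmetric matrix Lm, listed with multiplicity
   (N = CARD('n)): there is an orthonormal basis v 1, ..., v N with Lm v j = rho j v j. *)
definition ordered_eigenvalues :: "real^'n^'n \<Rightarrow> (nat \<Rightarrow> real) \<Rightarrow> bool" where
  "ordered_eigenvalues Lm \<rho> \<longleftrightarrow>
     (\<forall>j k. 1 \<le> j \<and> j \<le> k \<and> k \<le> CARD('n) \<longrightarrow> \<rho> j \<le> \<rho> k) \<and>
     (\<exists>v :: nat \<Rightarrow> real^'n.
        (\<forall>j\<in>{1..CARD('n)}. \<forall>k\<in>{1..CARD('n)}. v j \<bullet> v k = (if j = k then 1 else 0)) \<and>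
        (\<forall>j\<in>{1..CARD('n)}. Lm *v v j = \<rho> j *\<^sub>R v j))"

(* \<hat>L W = (L \<otimes> I_d) W, with W = stacked agent vectors W $ i *)
definition Lhat :: "real^'n^'n \<Rightarrow> 'a::real_vector^'n \<Rightarrow> 'a^'n" where
  "Lhat Lm W = (\<chi> i. \<Sum>j\<in>UNIV. Lm $ i $ j *\<^sub>R W $ j)"

definition Gfun :: "('n \<Rightarrow> 'a::real_inner \<Rightarrow> real) \<Rightarrow> real^'n^'n \<Rightarrow> real \<Rightarrow> real \<Rightarrow> 'a^'n \<Rightarrow> real" where
  "Gfun f Lm \<gamma> \<eta> W = (\<Sum>i\<in>UNIV. f i (W $ i)) + \<gamma> / (2 * \<eta>) * (W \<bullet> Lhat Lm W)"

definition prodset :: "'a set \<Rightarrow> ('a^'n) set" where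
  "prodset S = {W. \<forall>i. W $ i \<in> S}"

end

theory Submission
  imports Defs
begin

text \<open>Write \<open>\<beta>\<^sub>k = \<gamma>\<^sub>k / \<eta>\<^sub>k\<close>, of order \<open>(1 + \<delta> k)\<^sup>1\<^sup>/\<^sup>4\<close>, and let \<open>Z\<^sub>k\<close> be the minimizer of \<open>G\<^sub>k\<close>,
  the root of \<open>\<nabla>f(W) + \<beta>\<^sub>k \<hat>L W = 0\<close>. Strong monotonicity controls the consensus component of
  a perturbation and the spectral gap \<open>\<rho>\<^sub>2\<close> its disagreement component; hence
  \<open>\<parallel>Z\<^sub>k - 1 \<otimes> w*\<parallel> = O(1/\<beta>\<^sub>k)\<close> and \<open>\<parallel>Z\<^sub>k\<^sub>+\<^sub>1 - Z\<^sub>k\<parallel> = O((1 + \<delta> k)\<^sup>-\<^sup>5\<^sup>/\<^sup>4)\<close>.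
  A projected noisy step contracts \<open>e\<^sub>k = E\<parallel>W\<^sub>k - Z\<^sub>k\<parallel>\<^sup>2\<close> by \<open>1 - \<eta>\<^sub>k \<mu>\<close> up to the noise
  \<open>\<gamma>\<^sub>k\<^sup>2 \<Sigma>\<^sub>1 + \<eta>\<^sub>k\<^sup>2 \<Sigma>\<^sub>2\<close>, and moving the reference point from \<open>Z\<^sub>k\<close> to \<open>Z\<^sub>k\<^sub>+\<^sub>1\<close> costs a term of
  the same order \<open>(1 + \<delta> k)\<^sup>-\<^sup>3\<^sup>/\<^sup>2\<close>. The recursion
  \<open>e\<^sub>k\<^sub>+\<^sub>1 \<le> (1 - a / (1 + \<delta> k)) e\<^sub>k + c (1 + \<delta> k)\<^sup>-\<^sup>3\<^sup>/\<^sup>2\<close> with \<open>a \<ge> 5 \<delta> / 8\<close> yields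
  \<open>e\<^sub>k = O((1 + \<delta> k)\<^sup>-\<^sup>1\<^sup>/\<^sup>2)\<close>, and \<open>E\<parallel>W\<^sub>k - 1 \<otimes> w*\<parallel>\<^sup>2 \<le> 2 e\<^sub>k + 2 \<parallel>Z\<^sub>k - 1 \<otimes> w*\<parallel>\<^sup>2\<close>.
  The contraction estimates need the step-size conditions only for large \<open>k\<close>, where they hold
  automatically, and the finitely many earlier iterates stay in the bounded set \<open>prodset Wset\<close>.\<close>

section \<open>Spectral gap of the Laplacian\<close>

lemma orthonormal_basis_expansion:
  fixes v :: "nat \<Rightarrow> real^'n::finite"
  assumes on: "\<forall>j\<in>{1..CARD('n)}. \<forall>k\<in>{1..CARD('n)}. v j \<bullet> v k = (if j = k then 1 else 0)"
  shows "x = (\<Sum>j\<in>{1..CARD('n)}. (x \<bullet> v j) *\<^sub>R v j)"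
proof -
  let ?I = "{1..CARD('n)}"
  have inj: "inj_on v ?I"
  proof (rule inj_onI)
    fix j k assume "j \<in> ?I" "k \<in> ?I" "v j = v k"
    then show "j = k" using on by (metis zero_neq_one)
  qed
  have ind: "independent (v ` ?I)"
  proof (rule pairwise_orthogonal_independent)
    show "pairwise orthogonal (v ` ?I)" using on
      unfolding pairwise_def orthogonal_def by auto
    show "0 \<notin> v ` ?I" using on by force
  qed
  have spans: "UNIV \<subseteq> span (v ` ?I)"
    using card_ge_dim_independent[of "v ` ?I" UNIV] ind inj by (simp add: card_image)
  define y where "y = x - (\<Sum>j\<in>?I. (x \<bullet> v j) *\<^sub>R v j)"
  have y_orth: "y \<bullet> v k = 0" if "k \<in> ?I" for k
  proof -
    have "(\<Sum>j\<in>?I. (x \<bullet> v j) *\<^sub>R v j) \<bullet> v k = (\<Sum>j\<in>?I. (x \<bullet> v j) * (v j \<bullet> v k))"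
      by (simp add: inner_sum_left)
    also have "\<dots> = (\<Sum>j\<in>?I. if j = k then x \<bullet> v k else 0)"
      using on that by (intro sum.cong) auto
    also have "\<dots> = x \<bullet> v k" using that by simp
    finally show ?thesis unfolding y_def by (simp add: inner_diff_left)
  qed
  have "orthogonal y y"
    by (rule orthogonal_to_span[of y "v ` ?I"]) (use spans y_orth in \<open>auto simp: orthogonal_def\<close>)
  then show ?thesis unfolding y_def orthogonal_def by simp
qed

lemma symmetric_matrix_inner:
  fixes A :: "real^'n::finite^'n"
  assumes "transpose A = A"
  shows "(A *v x) \<bullet> y = x \<bullet> (A *v y)"
  by (metis assms dot_lmul_matrix transpose_matrix_vector)

text \<open>The eigenvector of \<open>\<rho> 1\<close> is parallel to \<open>1\<close>: every eigenvector of a positive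
  eigenvalue is orthogonal to the kernel vector \<open>1\<close>, and the eigenvectors span.\<close>

lemma laplacian_spectral_gap:
  fixes Lm :: "real^'n::finite^'n" and y :: "real^'n"
  assumes lap: "laplacian_matrix Lm" and eig: "ordered_eigenvalues Lm \<rho>"
    and rho2: "\<rho> 2 > 0" and y_perp: "y \<bullet> 1 = 0"
  shows "\<rho> 2 * (y \<bullet> y) \<le> y \<bullet> (Lm *v y)"
proof -
  let ?I = "{1..CARD('n)}"
  have sym: "transpose Lm = Lm" and L1: "Lm *v 1 = 0"
    using lap unfolding laplacian_matrix_def by auto
  obtain v where on: "\<forall>j\<in>?I. \<forall>k\<in>?I. v j \<bullet> v k = (if j = k then 1 else 0)"
    and ev: "\<forall>j\<in>?I. Lm *v v j = \<rho> j *\<^sub>R v j"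
    and mono: "\<forall>j k. 1 \<le> j \<and> j \<le> k \<and> k \<le> CARD('n) \<longrightarrow> \<rho> j \<le> \<rho> k"
    using eig unfolding ordered_eigenvalues_def by blast
  have expand: "x \<bullet> z = (\<Sum>j\<in>?I. (x \<bullet> v j) * (v j \<bullet> z))" for x z :: "real^'n"
    by (subst orthonormal_basis_expansion[OF on, of x]) (simp add: inner_sum_left)
  have one_perp: "(1::real^'n) \<bullet> v k = 0" if "k \<in> {2..CARD('n)}" for k
  proof -
    have "\<rho> k * (1 \<bullet> v k) = 1 \<bullet> (Lm *v v k)" using ev that by simp
    also have "\<dots> = (Lm *v 1) \<bullet> v k" by (rule symmetric_matrix_inner[OF sym, symmetric])
    finally have "\<rho> k * (1 \<bullet> v k) = 0" using L1 by simp
    moreover have "\<rho> 2 \<le> \<rho> k" using mono that by auto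
    ultimately show ?thesis using rho2 by auto
  qed
  have one_expand: "(1::real^'n) \<bullet> z = (1 \<bullet> v 1) * (v 1 \<bullet> z)" for z
  proof -
    have "(1::real^'n) \<bullet> z = (\<Sum>j\<in>?I. (1 \<bullet> v j) * (v j \<bullet> z))" by (rule expand)
    also have "\<dots> = (\<Sum>j\<in>{1}. (1 \<bullet> v j) * (v j \<bullet> z))"
      by (rule sum.mono_neutral_right) (use one_perp in auto)
    finally show ?thesis by simp
  qed
  have "(1::real^'n) \<bullet> v 1 \<noteq> 0"
    using one_expand[of 1] by auto
  then have y_v1: "y \<bullet> v 1 = 0"
    using one_expand[of y] y_perp by (simp add: inner_commute)
  have quad: "y \<bullet> (Lm *v y) = (\<Sum>j\<in>?I. \<rho> j * (y \<bullet> v j)^2)"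
  proof -
    have "v j \<bullet> (Lm *v y) = \<rho> j * (y \<bullet> v j)" if "j \<in> ?I" for j
      using symmetric_matrix_inner[OF sym, of "v j" y] ev that by (simp add: inner_commute)
    then show ?thesis
      unfolding expand[of y "Lm *v y"] by (intro sum.cong) (simp_all add: power2_eq_square)
  qed
  have "\<rho> 2 * (y \<bullet> y) = (\<Sum>j\<in>?I. \<rho> 2 * (y \<bullet> v j)^2)"
    by (simp add: expand[of y y] sum_distrib_left power2_eq_square inner_commute)
  also have "\<dots> \<le> (\<Sum>j\<in>?I. \<rho> j * (y \<bullet> v j)^2)"
  proof (rule sum_mono)
    fix j assume j: "j \<in> ?I"
    show "\<rho> 2 * (y \<bullet> v j)^2 \<le> \<rho> j * (y \<bullet> v j)^2"
    proof (cases "j = 1")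
      case False
      then have "\<rho> 2 \<le> \<rho> j" using mono j by auto
      then show ?thesis by (simp add: mult_right_mono)
    next
      case True
      then show ?thesis using y_v1 by simp
    qed
  qed
  finally show ?thesis using quad by simp
qed

section \<open>Block vectors and the lifted Laplacian\<close>

definition block_avg :: "'a::real_vector^'n::finite \<Rightarrow> 'a" where
  "block_avg W = (1 / real CARD('n)) *\<^sub>R (\<Sum>i\<in>UNIV. W $ i)"

definition block_dev :: "'a::real_vector^'n::finite \<Rightarrow> 'a^'n" where
  "block_dev W = W - vec (block_avg W)"

lemma inner_vec_sum: "(W::'a::real_inner^'n::finite) \<bullet> V = (\<Sum>i\<in>UNIV. W $ i \<bullet> V $ i)"
  by (simp add: inner_vec_def)

lemma norm_vec_sq: "(norm (W::'a::real_inner^'n::finite))^2 = (\<Sum>i\<in>UNIV. (norm (W $ i))^2)"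
  by (simp add: power2_norm_eq_inner inner_vec_sum)

lemma inner_vec_const: "(vec w :: 'a::real_inner^'n::finite) \<bullet> V = w \<bullet> (\<Sum>i\<in>UNIV. V $ i)"
  by (simp add: inner_vec_sum vec_def inner_sum_right)

lemma sum_block_dev: "(\<Sum>i\<in>UNIV. block_dev (W::'a::real_vector^'n::finite) $ i) = 0"
proof -
  have "(\<Sum>i\<in>UNIV. block_dev W $ i) = (\<Sum>i\<in>UNIV. W $ i) - real CARD('n) *\<^sub>R block_avg W"
    by (simp add: block_dev_def vec_def sum_subtractf sum_constant_scaleR)
  also have "real CARD('n) *\<^sub>R block_avg W = (\<Sum>i\<in>UNIV. W $ i)" by (simp add: block_avg_def)
  finally show ?thesis by simp
qed

lemma block_avg_dev_decomp: "(W::'a::real_vector^'n::finite) = vec (block_avg W) + block_dev W"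
  by (simp add: block_dev_def)

lemma inner_block_dev_right:
  fixes V W :: "'a::real_inner^'n::finite"
  assumes "(\<Sum>i\<in>UNIV. V $ i) = 0"
  shows "V \<bullet> W = V \<bullet> block_dev W"
proof -
  have "V \<bullet> vec (block_avg W) = 0"
    using assms by (simp add: inner_commute[of V] inner_vec_const)
  then show ?thesis by (simp add: block_dev_def inner_diff_right)
qed

lemma Lhat_diff: "Lhat Lm (U - V) = Lhat Lm U - Lhat Lm V"
  by (simp add: Lhat_def vec_eq_iff scaleR_diff_right sum_subtractf)

lemma Lhat_linear: "linear (Lhat Lm)"
  by (rule linearI)
     (simp_all add: Lhat_def vec_eq_iff scaleR_add_right sum.distrib scaleR_sum_right mult.commute)

lemma bounded_linear_Lhat: "bounded_linear (Lhat Lm :: 'a::euclidean_space^'n::finite \<Rightarrow> _)"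
  by (metis Lhat_linear linear_conv_bounded_linear)

lemma laplacian_row_sum:
  assumes "laplacian_matrix Lm" shows "(\<Sum>j\<in>UNIV. Lm $ i $ j) = 0"
proof -
  have "(Lm *v 1) $ i = 0" using assms unfolding laplacian_matrix_def by simp
  then show ?thesis by (simp add: matrix_vector_mult_def)
qed

lemma laplacian_col_sum:
  assumes "laplacian_matrix Lm" shows "(\<Sum>i\<in>UNIV. Lm $ i $ j) = 0"
proof -
  have "Lm $ i $ j = Lm $ j $ i" for i j
    using assms unfolding laplacian_matrix_def by (metis transpose_def vec_lambda_beta)
  then show ?thesis using laplacian_row_sum[OF assms, of j] by simp
qed

lemma Lhat_vec: assumes "laplacian_matrix Lm" shows "Lhat Lm (vec w) = 0"
  by (simp add: Lhat_def vec_def vec_eq_iff flip: scaleR_sum_left)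
     (simp add: laplacian_row_sum[OF assms])

lemma sum_Lhat: assumes "laplacian_matrix Lm" shows "(\<Sum>i\<in>UNIV. Lhat Lm W $ i) = 0"
proof -
  have "(\<Sum>i\<in>UNIV. Lhat Lm W $ i) = (\<Sum>j\<in>UNIV. \<Sum>i\<in>UNIV. Lm $ i $ j *\<^sub>R W $ j)"
    by (simp add: Lhat_def) (rule sum.swap)
  also have "\<dots> = (\<Sum>j\<in>UNIV. (\<Sum>i\<in>UNIV. Lm $ i $ j) *\<^sub>R W $ j)"
    by (simp add: scaleR_sum_left)
  finally show ?thesis by (simp add: laplacian_col_sum[OF assms])
qed

lemma Lhat_symmetric:
  assumes "laplacian_matrix Lm" shows "Lhat Lm U \<bullet> V = U \<bullet> Lhat Lm V"
proof -
  have sym: "Lm $ i $ j = Lm $ j $ i" for i j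
    using assms unfolding laplacian_matrix_def by (metis transpose_def vec_lambda_beta)
  have "Lhat Lm U \<bullet> V = (\<Sum>i\<in>UNIV. \<Sum>j\<in>UNIV. Lm $ i $ j * (U $ j \<bullet> V $ i))"
    by (simp add: inner_vec_sum Lhat_def inner_sum_left)
  also have "\<dots> = (\<Sum>j\<in>UNIV. \<Sum>i\<in>UNIV. Lm $ i $ j * (U $ j \<bullet> V $ i))" by (rule sum.swap)
  also have "\<dots> = U \<bullet> Lhat Lm V"
    by (simp add: inner_vec_sum Lhat_def inner_sum_right sym)
  finally show ?thesis .
qed

text \<open>Coordinatewise in an orthonormal basis \<open>b\<close> of \<open>'a\<close>, \<open>Lhat Lm\<close> acts as \<open>Lm\<close>
  on the scalar vector \<open>\<chi> i. D $ i \<bullet> b\<close>, which is orthogonal to \<open>1\<close> when \<open>D\<close> sums to zero.\<close>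

lemma Lhat_spectral_gap_sum_zero:
  fixes D :: "'a::euclidean_space^'n::finite"
  assumes lap: "laplacian_matrix Lm" and eig: "ordered_eigenvalues Lm \<rho>"
    and rho2: "\<rho> 2 > 0" and sum0: "(\<Sum>i\<in>UNIV. D $ i) = 0"
  shows "\<rho> 2 * (norm D)^2 \<le> D \<bullet> Lhat Lm D"
proof -
  define u where "u b = (\<chi> i. D $ i \<bullet> b)" for b
  have u_perp: "u b \<bullet> 1 = 0" for b
    using sum0 by (simp add: u_def inner_vec_def flip: inner_sum_left)
  have Lu: "(Lm *v u b) $ i = Lhat Lm D $ i \<bullet> b" for b i
    by (simp add: u_def matrix_vector_mult_def Lhat_def inner_sum_left)
  have "D \<bullet> Lhat Lm D = (\<Sum>i\<in>UNIV. \<Sum>b\<in>Basis. (D $ i \<bullet> b) * (Lhat Lm D $ i \<bullet> b))"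
    unfolding inner_vec_sum by (rule sum.cong[OF refl], rule euclidean_inner)
  also have "\<dots> = (\<Sum>b\<in>Basis. u b \<bullet> (Lm *v u b))"
    by (subst sum.swap) (simp add: inner_vec_def Lu, simp add: u_def)
  finally have quad: "D \<bullet> Lhat Lm D = (\<Sum>b\<in>Basis. u b \<bullet> (Lm *v u b))" .
  have "(norm D)^2 = (\<Sum>i\<in>UNIV. \<Sum>b\<in>Basis. (D $ i \<bullet> b) * (D $ i \<bullet> b))"
    unfolding power2_norm_eq_inner inner_vec_sum by (rule sum.cong[OF refl], rule euclidean_inner)
  also have "\<dots> = (\<Sum>b\<in>Basis. u b \<bullet> u b)"
    by (subst sum.swap) (simp add: inner_vec_def u_def)
  finally have "\<rho> 2 * (norm D)^2 = (\<Sum>b\<in>Basis. \<rho> 2 * (u b \<bullet> u b))"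
    by (simp add: sum_distrib_left)
  also have "\<dots> \<le> (\<Sum>b\<in>Basis. u b \<bullet> (Lm *v u b))"
    by (rule sum_mono) (rule laplacian_spectral_gap[OF lap eig rho2 u_perp])
  finally show ?thesis using quad by simp
qed

lemma Lhat_spectral_gap:
  fixes W :: "'a::euclidean_space^'n::finite"
  assumes lap: "laplacian_matrix Lm" and eig: "ordered_eigenvalues Lm \<rho>" and rho2: "\<rho> 2 > 0"
  shows "\<rho> 2 * (norm (block_dev W))^2 \<le> W \<bullet> Lhat Lm W"
proof -
  have "Lhat Lm W = Lhat Lm (block_dev W)"
    by (simp add: block_dev_def Lhat_diff Lhat_vec[OF lap])
  moreover have "Lhat Lm (block_dev W) \<bullet> W = Lhat Lm (block_dev W) \<bullet> block_dev W"
    by (rule inner_block_dev_right[OF sum_Lhat[OF lap]])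
  ultimately have "W \<bullet> Lhat Lm W = block_dev W \<bullet> Lhat Lm (block_dev W)"
    by (simp add: inner_commute)
  then show ?thesis
    using Lhat_spectral_gap_sum_zero[OF lap eig rho2 sum_block_dev] by simp
qed

lemma Lhat_nonneg:
  fixes W :: "'a::euclidean_space^'n::finite"
  assumes "laplacian_matrix Lm" "ordered_eigenvalues Lm \<rho>" "\<rho> 2 > 0"
  shows "0 \<le> W \<bullet> Lhat Lm W"
  using Lhat_spectral_gap[OF assms, of W] assms(3)
  by (meson order_trans mult_nonneg_nonneg less_imp_le zero_le_power2)

section \<open>Strong convexity and the penalized objective\<close>

lemma strongly_convex_gradient_ineq:
  fixes g :: "'a::real_inner \<Rightarrow> real"
  assumes sc: "strongly_convex \<mu> g" and gd: "\<forall>z. GDERIV g z :> dg z"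
  shows "g x + dg x \<bullet> (y - x) + \<mu> / 2 * (norm (y - x))^2 \<le> g y"
proof -
  define D where "D = dg x \<bullet> (y - x)"
  have der: "((\<lambda>t. g (x + t *\<^sub>R (y - x))) has_derivative (\<lambda>t. t * D)) (at 0)"
  proof -
    have "((\<lambda>t. g (x + t *\<^sub>R (y - x))) has_derivative (\<lambda>t. (t *\<^sub>R (y - x)) \<bullet> dg (x + 0 *\<^sub>R (y - x)))) (at 0)"
      using gd unfolding gderiv_def
      by (intro has_derivative_compose[where f="\<lambda>t. x + t *\<^sub>R (y - x)" and g=g, unfolded o_def])
         (auto intro!: derivative_eq_intros)
    then show ?thesis by (simp add: D_def inner_commute)
  qed
  then have "((\<lambda>t. g (x + t *\<^sub>R (y - x))) has_field_derivative D) (at 0)"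
    unfolding has_field_derivative_def by (rule has_derivative_eq_rhs) (auto simp: mult.commute)
  then have "((\<lambda>t. g (x + t *\<^sub>R (y - x))) has_field_derivative D) (at 0 within {0<..})"
    by (rule has_field_derivative_at_within)
  then have lim: "((\<lambda>t. (g (x + t *\<^sub>R (y - x)) - g x) / t) \<longlongrightarrow> D) (at_right 0)"
    by (simp add: has_field_derivative_iff)
  have lim2: "((\<lambda>t. g y - g x - \<mu> / 2 * (1 - t) * (norm (y - x))^2) \<longlongrightarrow> g y - g x - \<mu> / 2 * (1 - 0) * (norm (y - x))^2) (at_right 0)"
    by (intro tendsto_intros)
  have ev: "eventually (\<lambda>t. (g (x + t *\<^sub>R (y - x)) - g x) / t \<le> g y - g x - \<mu> / 2 * (1 - t) * (norm (y - x))^2) (at_right (0::real))"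
  proof -
    have "eventually (\<lambda>t. 0 < t \<and> t < 1) (at_right (0::real))"
      by (simp add: eventually_at_right_field) (metis zero_less_one)
    then show ?thesis
    proof (rule eventually_mono)
      fix t :: real assume t: "0 < t \<and> t < 1"
      have "g (t *\<^sub>R y + (1 - t) *\<^sub>R x) \<le> t * g y + (1 - t) * g x - \<mu> / 2 * t * (1 - t) * (norm (y - x))\<^sup>2"
        using sc t unfolding strongly_convex_def by auto
      moreover have "t *\<^sub>R y + (1 - t) *\<^sub>R x = x + t *\<^sub>R (y - x)" by (simp add: algebra_simps)
      ultimately have "g (x + t *\<^sub>R (y - x)) - g x \<le> t * (g y - g x - \<mu> / 2 * (1 - t) * (norm (y - x))\<^sup>2)"
        by (simp add: algebra_simps)
      then show "(g (x + t *\<^sub>R (y - x)) - g x) / t \<le> g y - g x - \<mu> / 2 * (1 - t) * (norm (y - x))^2"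
        using t by (simp add: divide_le_eq mult.commute)
    qed
  qed
  have "D \<le> g y - g x - \<mu> / 2 * (1 - 0) * (norm (y - x))^2"
    by (rule tendsto_le[OF _ lim2 lim ev]) simp
  then show ?thesis by (simp add: D_def)
qed


lemma strongly_convex_gradient_monotone:
  fixes g :: "'a::real_inner \<Rightarrow> real"
  assumes sc: "strongly_convex \<mu> g" and gd: "\<forall>z. GDERIV g z :> dg z"
  shows "\<mu> * (norm (x - y))^2 \<le> (dg x - dg y) \<bullet> (x - y)"
proof -
  have "g x + dg x \<bullet> (y - x) + \<mu> / 2 * (norm (y - x))^2 \<le> g y"
    and "g y + dg y \<bullet> (x - y) + \<mu> / 2 * (norm (x - y))^2 \<le> g x"
    by (rule strongly_convex_gradient_ineq[OF sc gd])+
  moreover have "dg x \<bullet> (y - x) = - (dg x \<bullet> (x - y))" by (simp add: inner_diff_right)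
  ultimately show ?thesis by (simp add: norm_minus_commute inner_diff_left algebra_simps)
qed

definition block_grad :: "('n::finite \<Rightarrow> 'a \<Rightarrow> 'a) \<Rightarrow> 'a^'n \<Rightarrow> 'a^'n" where
  "block_grad grad W = (\<chi> i. grad i (W $ i))"

lemma block_grad_strongly_monotone:
  fixes f :: "'n::finite \<Rightarrow> 'a::real_inner \<Rightarrow> real"
  assumes sc: "\<forall>i. strongly_convex \<mu> (f i)" and gd: "\<forall>i z. GDERIV (f i) z :> grad i z"
  shows "\<mu> * (norm (X - Y))^2 \<le> (block_grad grad X - block_grad grad Y) \<bullet> (X - Y)"
proof -
  have "\<mu> * (norm (X - Y))^2 = (\<Sum>i\<in>UNIV. \<mu> * (norm (X $ i - Y $ i))^2)"
    by (simp add: norm_vec_sq sum_distrib_left)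
  also have "\<dots> \<le> (\<Sum>i\<in>UNIV. (grad i (X $ i) - grad i (Y $ i)) \<bullet> (X $ i - Y $ i))"
    by (rule sum_mono, rule strongly_convex_gradient_monotone) (use sc gd in auto)
  also have "\<dots> = (block_grad grad X - block_grad grad Y) \<bullet> (X - Y)"
    by (simp add: inner_vec_sum block_grad_def)
  finally show ?thesis .
qed

lemma block_grad_lipschitz:
  fixes grad :: "'n::finite \<Rightarrow> 'a::real_inner \<Rightarrow> 'a"
  assumes lip: "\<forall>i. Lc-lipschitz_on UNIV (grad i)"
  shows "norm (block_grad grad X - block_grad grad Y) \<le> Lc * norm (X - Y)"
proof -
  have L0: "Lc \<ge> 0" using lip unfolding lipschitz_on_def by auto
  have "(norm (block_grad grad X - block_grad grad Y))^2
      = (\<Sum>i\<in>UNIV. (norm (grad i (X $ i) - grad i (Y $ i)))^2)"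
    by (simp add: norm_vec_sq block_grad_def)
  also have "\<dots> \<le> (\<Sum>i\<in>UNIV. (Lc * norm (X $ i - Y $ i))^2)"
    using lip by (intro sum_mono power_mono) (auto simp: lipschitz_on_def dist_norm)
  also have "\<dots> = (Lc * norm (X - Y))^2"
    by (simp add: norm_vec_sq power_mult_distrib sum_distrib_left)
  finally show ?thesis using L0 by (simp add: power2_le_iff_abs_le)
qed

lemma Gfun_has_gradient:
  fixes f :: "'n::finite \<Rightarrow> 'a::euclidean_space \<Rightarrow> real"
  assumes lap: "laplacian_matrix Lm" and gd: "\<forall>i z. GDERIV (f i) z :> grad i z"
  shows "GDERIV (Gfun f Lm \<gamma> \<eta>) W :> (block_grad grad W + (\<gamma> / \<eta>) *\<^sub>R Lhat Lm W)"
proof -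
  have "((\<lambda>W. f i (W $ i)) has_derivative (\<lambda>h. (h $ i) \<bullet> grad i (W $ i))) (at W)" for i
    using gd unfolding gderiv_def
    by (intro has_derivative_compose[where f="\<lambda>W. W $ i" and g="f i", unfolded o_def])
       (auto intro!: bounded_linear_imp_has_derivative)
  then have d_sum: "((\<lambda>W. \<Sum>i\<in>UNIV. f i (W $ i)) has_derivative
      (\<lambda>h. \<Sum>i\<in>UNIV. (h $ i) \<bullet> grad i (W $ i))) (at W)"
    by (intro has_derivative_sum) auto
  have d_quad: "((\<lambda>W. W \<bullet> Lhat Lm W) has_derivative (\<lambda>h. W \<bullet> Lhat Lm h + h \<bullet> Lhat Lm W)) (at W)"
    by (rule has_derivative_inner[OF has_derivative_ident linear_imp_has_derivative[OF Lhat_linear]])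
  have "(Gfun f Lm \<gamma> \<eta> has_derivative (\<lambda>h. (\<Sum>i\<in>UNIV. (h $ i) \<bullet> grad i (W $ i))
      + \<gamma> / (2 * \<eta>) * (W \<bullet> Lhat Lm h + h \<bullet> Lhat Lm W))) (at W)"
    unfolding Gfun_def[abs_def] by (intro has_derivative_add[OF d_sum] has_derivative_mult_right d_quad)
  moreover have "(\<Sum>i\<in>UNIV. (h $ i) \<bullet> grad i (W $ i)) + \<gamma> / (2 * \<eta>) * (W \<bullet> Lhat Lm h + h \<bullet> Lhat Lm W)
      = h \<bullet> (block_grad grad W + (\<gamma> / \<eta>) *\<^sub>R Lhat Lm W)" for h
  proof -
    have "W \<bullet> Lhat Lm h = h \<bullet> Lhat Lm W"
      using Lhat_symmetric[OF lap, of W h] by (simp add: inner_commute)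
    moreover have "(\<Sum>i\<in>UNIV. (h $ i) \<bullet> grad i (W $ i)) = h \<bullet> block_grad grad W"
      by (simp add: inner_vec_sum block_grad_def)
    ultimately show ?thesis by (simp add: inner_add_right)
  qed
  ultimately show ?thesis unfolding gderiv_def by simp
qed

lemma Gfun_gradient_eq:
  fixes f :: "'n::finite \<Rightarrow> 'a::euclidean_space \<Rightarrow> real"
  assumes lap: "laplacian_matrix Lm" and gd: "\<forall>i z. GDERIV (f i) z :> grad i z"
    and G: "GDERIV (Gfun f Lm \<gamma> \<eta>) W :> G"
  shows "G = block_grad grad W + (\<gamma> / \<eta>) *\<^sub>R Lhat Lm W"
proof -
  define G' where "G' = block_grad grad W + (\<gamma> / \<eta>) *\<^sub>R Lhat Lm W"
  have "(\<lambda>h. h \<bullet> G) = (\<lambda>h. h \<bullet> G')"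
    using has_derivative_unique G Gfun_has_gradient[OF lap gd] unfolding gderiv_def G'_def by blast
  then have "(G - G') \<bullet> G = (G - G') \<bullet> G'" by metis
  then have "(G - G') \<bullet> (G - G') = 0" by (simp add: inner_diff_right)
  then show ?thesis by (simp add: G'_def)
qed

lemma minimizer_grad_sum_zero:
  fixes f :: "'n::finite \<Rightarrow> 'a::real_inner \<Rightarrow> real"
  assumes gd: "\<forall>i z. GDERIV (f i) z :> grad i z"
    and min: "\<forall>w. (\<Sum>i\<in>UNIV. f i wstar) \<le> (\<Sum>i\<in>UNIV. f i w)"
  shows "(\<Sum>i\<in>UNIV. grad i wstar) = 0"
proof -
  define S where "S = (\<Sum>i\<in>UNIV. grad i wstar)"
  have "((\<lambda>w. \<Sum>i\<in>UNIV. f i w) has_derivative (\<lambda>h. \<Sum>i\<in>UNIV. h \<bullet> grad i wstar)) (at wstar)"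
    using gd unfolding gderiv_def by (intro has_derivative_sum) auto
  then have "(\<lambda>h. \<Sum>i\<in>UNIV. h \<bullet> grad i wstar) = (\<lambda>h. 0)"
    by (rule has_derivative_local_min) (use min in auto)
  then have "S \<bullet> S = 0" by (metis S_def inner_sum_right)
  then show ?thesis by (simp add: S_def)
qed

section \<open>The penalized deterministic problem\<close>

text \<open>\<open>Ph\<close> stands for the stacked gradient \<open>\<nabla>f\<close>, so \<open>penalized_root b\<close> below is the
  minimizer of \<open>f(W) + b / 2 W\<^sup>T \<hat>L W\<close>, i.e. of \<open>G\<^sub>k\<close> for \<open>b = \<gamma>\<^sub>k / \<eta>\<^sub>k\<close>.\<close>

locale penalized_operator =
  fixes Ph :: "'a::euclidean_space^'n::finite \<Rightarrow> 'a^'n" and Lm :: "real^'n^'n"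
    and \<rho> :: "nat \<Rightarrow> real" and \<mu> Lc :: real
  assumes strongly_monotone: "\<And>X Y. \<mu> * (norm (X - Y))^2 \<le> (Ph X - Ph Y) \<bullet> (X - Y)"
    and lipschitz: "\<And>X Y. norm (Ph X - Ph Y) \<le> Lc * norm (X - Y)"
    and laplacian: "laplacian_matrix Lm" and eigenvalues: "ordered_eigenvalues Lm \<rho>"
    and rho2_pos: "0 < \<rho> 2" and mu_pos: "0 < \<mu>" and mu_le_Lc: "\<mu> \<le> Lc"
begin

definition Lnorm :: real where
  "Lnorm = onorm (Lhat Lm :: 'a^'n \<Rightarrow> 'a^'n)"

lemma Lnorm_nonneg: "0 \<le> Lnorm"
  unfolding Lnorm_def by (rule onorm_pos_le[OF bounded_linear_Lhat])

lemma norm_Lhat_le: "norm (Lhat Lm D) \<le> Lnorm * norm (D :: 'a^'n)"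
  unfolding Lnorm_def by (rule onorm[OF bounded_linear_Lhat])

lemma continuous_on_Ph: "continuous_on UNIV Ph"
proof (rule lipschitz_on_continuous_on)
  show "Lc-lipschitz_on UNIV Ph"
    using lipschitz mu_pos mu_le_Lc by (auto simp: lipschitz_on_def dist_norm)
qed

lemma penalized_step_contraction:
  assumes b: "0 \<le> b" and t: "0 \<le> t" and small: "t * (Lc + b * Lnorm)^2 \<le> \<mu>"
  shows "(norm ((X - t *\<^sub>R (Ph X + b *\<^sub>R Lhat Lm X)) - (Y - t *\<^sub>R (Ph Y + b *\<^sub>R Lhat Lm Y))))^2
     \<le> (1 - t * \<mu>) * (norm (X - Y))^2"
proof -
  define D where "D = X - Y"
  define S where "S = (Ph X - Ph Y) + b *\<^sub>R Lhat Lm D"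
  have step: "(X - t *\<^sub>R (Ph X + b *\<^sub>R Lhat Lm X)) - (Y - t *\<^sub>R (Ph Y + b *\<^sub>R Lhat Lm Y))
      = D - t *\<^sub>R S"
    by (simp add: S_def D_def Lhat_diff algebra_simps)
  have "0 \<le> b * (D \<bullet> Lhat Lm D)"
    using Lhat_nonneg[OF laplacian eigenvalues rho2_pos, of D] b by simp
  then have "\<mu> * (norm D)^2 \<le> (Ph X - Ph Y) \<bullet> D + b * (D \<bullet> Lhat Lm D)"
    using strongly_monotone[of X Y] unfolding D_def by linarith
  also have "\<dots> = S \<bullet> D"
    by (simp add: S_def inner_add_left inner_commute[of "Lhat Lm D" D])
  finally have S_D: "\<mu> * (norm D)^2 \<le> S \<bullet> D" .
  have "norm S \<le> norm (Ph X - Ph Y) + b * norm (Lhat Lm D)"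
    unfolding S_def using b norm_triangle_ineq by (metis abs_of_nonneg norm_scaleR)
  also have "\<dots> \<le> Lc * norm D + b * (Lnorm * norm D)"
    using lipschitz[of X Y] norm_Lhat_le[of D] b unfolding D_def
    by (intro add_mono mult_left_mono) auto
  finally have "(norm S)^2 \<le> ((Lc + b * Lnorm) * norm D)^2"
    by (intro power_mono) (simp_all add: algebra_simps)
  then have "t^2 * (norm S)^2 \<le> t * (t * (Lc + b * Lnorm)^2) * (norm D)^2"
    using t by (simp add: mult_left_mono power_mult_distrib power2_eq_square mult_ac)
  also have "\<dots> \<le> t * \<mu> * (norm D)^2"
    using small t by (intro mult_right_mono mult_left_mono) auto
  finally have S_S: "t^2 * (norm S)^2 \<le> t * \<mu> * (norm D)^2" .
  have "2 * t * (\<mu> * (norm D)^2) \<le> 2 * t * (S \<bullet> D)"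
    using S_D t by (simp add: mult_left_mono)
  moreover have "(norm (D - t *\<^sub>R S))^2 = (norm D)^2 - 2 * t * (S \<bullet> D) + t^2 * (norm S)^2"
    unfolding power2_norm_eq_inner
    by (simp add: inner_diff_left inner_diff_right inner_commute[of D S] power2_eq_square algebra_simps)
  ultimately have "(norm (D - t *\<^sub>R S))^2 \<le> (1 - t * \<mu>) * (norm D)^2"
    using S_S by (simp add: algebra_simps)
  then show ?thesis unfolding step D_def .
qed

text \<open>Since the components of \<open>Ph X - Ph Y\<close> sum to zero, the mean part of \<open>X - Y\<close> is
  controlled by the disagreement part through strong monotonicity and Lipschitz continuity.\<close>

lemma block_avg_diff_bound:
  assumes sum0: "(\<Sum>i\<in>UNIV. (Ph X - Ph Y) $ i) = 0"
  shows "norm (vec (block_avg (X - Y)) :: 'a^'n) \<le> (Lc / \<mu>) * norm (block_dev (X - Y))"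
proof -
  define Q where "Q = (vec (block_avg (X - Y)) :: 'a^'n)"
  define D where "D = block_dev (X - Y)"
  define Z where "Z = Y + Q"
  have XZ: "X - Z = D" using block_avg_dev_decomp[of "X - Y"] by (simp add: Z_def Q_def D_def algebra_simps)
  have "Q \<bullet> (Ph X - Ph Y) = 0"
    unfolding Q_def inner_vec_const sum0 by simp
  then have cancel: "Q \<bullet> (Ph Z - Ph Y) = - (Q \<bullet> (Ph X - Ph Z))"
    by (simp add: inner_diff_right)
  have "\<mu> * (norm Q)^2 \<le> Q \<bullet> (Ph Z - Ph Y)"
    using strongly_monotone[of Z Y] by (simp add: Z_def inner_commute)
  also have "\<dots> \<le> norm Q * norm (Ph X - Ph Z)"
    unfolding cancel by (metis Cauchy_Schwarz_ineq2 abs_le_D2)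
  also have "\<dots> \<le> norm Q * (Lc * norm D)"
    using lipschitz[of X Z] XZ by (simp add: mult_left_mono)
  finally have "norm Q * (\<mu> * norm Q) \<le> norm Q * (Lc * norm D)"
    by (simp add: power2_eq_square mult_ac)
  then have "\<mu> * norm Q \<le> Lc * norm D"
    using mu_pos mu_le_Lc by (cases "norm Q = 0") (auto intro: mult_left_le_imp_le)
  then show ?thesis unfolding Q_def D_def using mu_pos by (simp add: field_simps)
qed

lemma penalized_perturbation_bound:
  assumes b: "0 < b" and sum0: "(\<Sum>i\<in>UNIV. (Ph X - Ph Y) $ i) = 0"
    and R: "Ph X - Ph Y + b *\<^sub>R Lhat Lm (X - Y) = R" and sumR: "(\<Sum>i\<in>UNIV. R $ i) = 0"
  shows "norm (X - Y) \<le> (1 + Lc / \<mu>) * (norm R / (b * \<rho> 2))"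
proof -
  define D where "D = X - Y"
  have "b * (\<rho> 2 * (norm (block_dev D))^2) \<le> R \<bullet> D"
  proof -
    have "R \<bullet> D = (Ph X - Ph Y) \<bullet> D + b * (D \<bullet> Lhat Lm D)"
      unfolding R[symmetric] D_def by (simp add: inner_add_left inner_commute[of "Lhat Lm (X - Y)"])
    moreover have "0 \<le> (Ph X - Ph Y) \<bullet> D"
      using strongly_monotone[of X Y] mu_pos unfolding D_def
      by (meson less_imp_le mult_nonneg_nonneg order_trans zero_le_power2)
    moreover have "\<rho> 2 * (norm (block_dev D))^2 \<le> D \<bullet> Lhat Lm D"
      by (rule Lhat_spectral_gap[OF laplacian eigenvalues rho2_pos])
    ultimately show ?thesis using b by (smt (verit) mult_left_mono)
  qed
  also have "R \<bullet> D = R \<bullet> block_dev D" by (rule inner_block_dev_right[OF sumR])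
  also have "\<dots> \<le> norm R * norm (block_dev D)" by (rule Cauchy_Schwarz_ineq2[THEN abs_le_D1])
  finally have "b * \<rho> 2 * norm (block_dev D) \<le> norm R"
    by (cases "norm (block_dev D) = 0")
       (auto simp: power2_eq_square mult.assoc[symmetric] mult_le_cancel_right_pos)
  then have dev: "norm (block_dev D) \<le> norm R / (b * \<rho> 2)"
    using b rho2_pos by (simp add: field_simps)
  have "norm D \<le> norm (vec (block_avg D) :: 'a^'n) + norm (block_dev D)"
    by (metis block_avg_dev_decomp norm_triangle_ineq)
  also have "\<dots> \<le> (1 + Lc / \<mu>) * norm (block_dev D)"
    using block_avg_diff_bound[OF sum0] unfolding D_def by (simp add: algebra_simps)
  also have "\<dots> \<le> (1 + Lc / \<mu>) * (norm R / (b * \<rho> 2))"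
    using dev mu_pos mu_le_Lc by (intro mult_left_mono) (auto simp: divide_nonneg_nonneg)
  finally show ?thesis unfolding D_def .
qed

text \<open>A root is the fixed point of the gradient step with step size \<open>\<mu> / (Lc + b Lnorm)\<^sup>2\<close>,
  which is a contraction.\<close>

lemma penalized_root_exists:
  assumes b: "0 \<le> b"
  shows "\<exists>W. Ph W + b *\<^sub>R Lhat Lm W = 0"
proof -
  define L' where "L' = Lc + b * Lnorm"
  have L'_ge: "\<mu> \<le> L'" using mu_le_Lc mult_nonneg_nonneg[OF b Lnorm_nonneg] by (simp add: L'_def)
  then have L'_pos: "0 < L'" using mu_pos by simp
  define t where "t = \<mu> / L'^2"
  define c where "c = sqrt (1 - t * \<mu>)"
  have t_pos: "0 < t" using mu_pos L'_pos by (simp add: t_def)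
  have "t * \<mu> = (\<mu> / L')^2" by (simp add: t_def power2_eq_square)
  also have "\<dots> \<le> 1" using L'_ge L'_pos mu_pos by (intro power_le_one) auto
  finally have tmu: "t * \<mu> \<le> 1" .
  then have c0: "0 \<le> c" and c1: "c < 1"
    using t_pos mu_pos by (auto simp: c_def)
  define T where "T W = W - t *\<^sub>R (Ph W + b *\<^sub>R Lhat Lm W)" for W
  have "dist (T X) (T Y) \<le> c * dist X Y" for X Y
  proof -
    have "(norm (T X - T Y))^2 \<le> (1 - t * \<mu>) * (norm (X - Y))^2"
      unfolding T_def using b t_pos L'_pos
      by (intro penalized_step_contraction) (auto simp: t_def L'_def)
    also have "\<dots> = (c * norm (X - Y))^2"
      using tmu by (simp add: c_def power_mult_distrib)
    finally show ?thesis using c0 by (simp add: dist_norm power2_le_iff_abs_le)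
  qed
  then obtain W where "T W = W" using banach_fix_type[OF c0 c1] by blast
  then have "t *\<^sub>R (Ph W + b *\<^sub>R Lhat Lm W) = 0" unfolding T_def by (simp add: algebra_simps)
  then show ?thesis using t_pos by auto
qed

definition penalized_root :: "real \<Rightarrow> 'a^'n" where
  "penalized_root b = (SOME W. Ph W + b *\<^sub>R Lhat Lm W = 0)"

lemma penalized_root_eq: "0 \<le> b \<Longrightarrow> Ph (penalized_root b) + b *\<^sub>R Lhat Lm (penalized_root b) = 0"
  unfolding penalized_root_def by (rule someI_ex[OF penalized_root_exists])

lemma sum_Ph_penalized_root:
  assumes "0 \<le> b" shows "(\<Sum>i\<in>UNIV. Ph (penalized_root b) $ i) = 0"
proof -
  have "Ph (penalized_root b) = - (b *\<^sub>R Lhat Lm (penalized_root b))"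
    using penalized_root_eq[OF assms] by (simp add: eq_neg_iff_add_eq_0)
  then show ?thesis by (simp add: sum_negf flip: scaleR_sum_right add: sum_Lhat[OF laplacian])
qed

lemma penalized_root_dist:
  assumes b: "0 < b" and sum0: "(\<Sum>i\<in>UNIV. Ph (vec w) $ i) = 0"
  shows "norm (penalized_root b - vec w) \<le> (1 + Lc / \<mu>) * norm (Ph (vec w)) / (b * \<rho> 2)"
proof -
  let ?Z = "penalized_root b"
  have "norm (?Z - vec w) \<le> (1 + Lc / \<mu>) * (norm (- Ph (vec w)) / (b * \<rho> 2))"
  proof (rule penalized_perturbation_bound[OF b])
    show "(\<Sum>i\<in>UNIV. (Ph ?Z - Ph (vec w)) $ i) = 0"
      using sum_Ph_penalized_root[of b] b sum0 by (simp add: sum_subtractf)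
    show "Ph ?Z - Ph (vec w) + b *\<^sub>R Lhat Lm (?Z - vec w) = - Ph (vec w)"
      using penalized_root_eq[of b] b by (simp add: Lhat_diff Lhat_vec[OF laplacian] algebra_simps)
    show "(\<Sum>i\<in>UNIV. (- Ph (vec w)) $ i) = 0" using sum0 by (simp add: sum_negf)
  qed
  then show ?thesis by simp
qed

text \<open>Moving the penalty from \<open>b\<close> to \<open>b'\<close> perturbs the root equation by the residual
  \<open>((b' - b) / b) Ph (penalized_root b)\<close>.\<close>

lemma penalized_root_drift:
  assumes b: "0 < b" "b \<le> b'"
  shows "norm (penalized_root b' - penalized_root b)
    \<le> (1 + Lc / \<mu>) * ((b' - b) * norm (Ph (penalized_root b)) / (b * b' * \<rho> 2))"
proof -
  let ?Z = "penalized_root b" and ?Z' = "penalized_root b'"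
  define R where "R = ((b' - b) / b) *\<^sub>R Ph ?Z"
  have root: "Ph ?Z + b *\<^sub>R Lhat Lm ?Z = 0" and root': "Ph ?Z' + b' *\<^sub>R Lhat Lm ?Z' = 0"
    using penalized_root_eq b by auto
  have "Lhat Lm ?Z = (1 / b) *\<^sub>R (b *\<^sub>R Lhat Lm ?Z)" using b by simp
  also have "b *\<^sub>R Lhat Lm ?Z = - Ph ?Z" using root by (simp add: eq_neg_iff_add_eq_0 add.commute)
  finally have "Lhat Lm ?Z = - (1 / b) *\<^sub>R Ph ?Z" by simp
  then have LZ: "b' *\<^sub>R Lhat Lm ?Z = - (b' / b) *\<^sub>R Ph ?Z" by simp
  have "Ph ?Z' - Ph ?Z + b' *\<^sub>R Lhat Lm (?Z' - ?Z)
      = (Ph ?Z' + b' *\<^sub>R Lhat Lm ?Z') - Ph ?Z - b' *\<^sub>R Lhat Lm ?Z"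
    by (simp add: Lhat_diff scaleR_diff_right)
  also have "\<dots> = (b' / b - 1) *\<^sub>R Ph ?Z"
    unfolding root' LZ by (simp add: scaleR_diff_left)
  also have "\<dots> = R" using b by (simp add: R_def diff_divide_distrib)
  finally have "norm (?Z' - ?Z) \<le> (1 + Lc / \<mu>) * (norm R / (b' * \<rho> 2))"
    using b sum_Ph_penalized_root[of b] sum_Ph_penalized_root[of b']
    by (intro penalized_perturbation_bound)
       (auto simp: sum_subtractf R_def simp flip: scaleR_sum_right)
  also have "norm R / (b' * \<rho> 2) = (b' - b) * norm (Ph ?Z) / (b * b' * \<rho> 2)"
    using b by (simp add: R_def)
  finally show ?thesis .
qed

end

section \<open>Second moments of noisy steps\<close>

lemma filtration_subalgebra_Suc:
  assumes "filtration \<Omega> F" shows "subalgebra (F (Suc k)) (F k)"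
  using filtration.space_F[OF assms] filtration.sets_F_mono[OF assms, of k "Suc k"]
  by (simp add: subalgebra_def)

lemma norm_add_sq_le_weighted:
  fixes a b :: "'v::real_inner"
  assumes c: "c > 0"
  shows "(norm (a + b))^2 \<le> (1 + c) * (norm a)^2 + (1 + 1 / c) * (norm b)^2"
proof -
  have "2 * (a \<bullet> b) \<le> 2 * (norm a * norm b)" using Cauchy_Schwarz_ineq2[of a b] by simp
  also have "2 * (norm a * norm b) \<le> c * (norm a)^2 + (1 / c) * (norm b)^2"
  proof -
    have "0 \<le> (c * norm a - norm b)^2" by simp
    then have "2 * c * (norm a * norm b) \<le> c^2 * (norm a)^2 + (norm b)^2"
      by (simp add: power2_diff power_mult_distrib algebra_simps)
    then have "(2 * (norm a * norm b)) * c \<le> (c * (norm a)^2 + (1 / c) * (norm b)^2) * c"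
      using c by (simp add: algebra_simps power2_eq_square)
    then show ?thesis using c by (simp add: mult_le_cancel_right_pos)
  qed
  finally have "2 * (a \<bullet> b) \<le> c * (norm a)^2 + (1 / c) * (norm b)^2" .
  moreover have "(norm (a + b))^2 = (norm a)^2 + 2 * (a \<bullet> b) + (norm b)^2"
    unfolding power2_norm_eq_inner by (simp add: inner_add_left inner_add_right inner_commute[of b a])
  ultimately show ?thesis by (simp add: algebra_simps)
qed

lemma integral_sq_norm_le_cond_bound:
  fixes e :: "'b \<Rightarrow> 'v::euclidean_space"
  assumes P: "prob_space M" and sub: "subalgebra M F"
    and e: "e \<in> borel_measurable M" and S: "0 \<le> S"
    and bound: "AE \<omega> in M. nn_cond_exp M F (\<lambda>x. ennreal ((norm (e x))^2)) \<omega> \<le> ennreal S"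
  shows "integrable M (\<lambda>x. (norm (e x))^2)" "(\<integral>x. (norm (e x))^2 \<partial>M) \<le> S"
proof -
  interpret prob_space M by (rule P)
  interpret FS: finite_measure_subalgebra M F
    by (intro finite_measure_subalgebra.intro finite_measure_subalgebra_axioms.intro
        finite_measure_axioms sub)
  have "(\<integral>\<^sup>+x. ennreal ((norm (e x))^2) \<partial>M)
      = (\<integral>\<^sup>+x. 1 * nn_cond_exp M F (\<lambda>x. ennreal ((norm (e x))^2)) x \<partial>M)"
    using FS.nn_cond_exp_intg[of "\<lambda>_. 1" "\<lambda>x. ennreal ((norm (e x))^2)"] e by simp
  also have "\<dots> \<le> (\<integral>\<^sup>+x. ennreal S \<partial>M)"
    by (rule nn_integral_mono_AE) (use bound in auto)
  also have "\<dots> = ennreal S" by (simp add: emeasure_space_1)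
  finally have nn: "(\<integral>\<^sup>+x. ennreal ((norm (e x))^2) \<partial>M) \<le> ennreal S" .
  show int: "integrable M (\<lambda>x. (norm (e x))^2)"
    by (rule integrableI_nonneg) (use e nn in \<open>auto simp: top.not_eq_extremum intro: le_less_trans\<close>)
  have "ennreal (\<integral>x. (norm (e x))^2 \<partial>M) = (\<integral>\<^sup>+x. ennreal ((norm (e x))^2) \<partial>M)"
    by (rule nn_integral_eq_integral[OF int, symmetric]) simp
  then have "ennreal (\<integral>x. (norm (e x))^2 \<partial>M) \<le> ennreal S" using nn by simp
  then show "(\<integral>x. (norm (e x))^2 \<partial>M) \<le> S" using S ennreal_le_iff by blast
qed

lemma abs_le_one_plus_square: "\<bar>r::real\<bar> \<le> 1 + r^2"
proof -
  have "0 \<le> (\<bar>r\<bar> - 1 / 2)^2" by simp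
  then have "\<bar>r\<bar> \<le> r^2 + 1 / 4" by (simp add: power2_diff power2_abs power2_eq_square algebra_simps)
  then show ?thesis by linarith
qed

lemma integrable_bounded_mult_sq_integrable:
  fixes g h :: "'b \<Rightarrow> real"
  assumes "finite_measure M" "g \<in> borel_measurable M" "h \<in> borel_measurable M"
    and g: "\<forall>x\<in>space M. \<bar>g x\<bar> \<le> B" and h: "integrable M (\<lambda>x. (h x)^2)"
  shows "integrable M (\<lambda>x. g x * h x)"
proof (rule Bochner_Integration.integrable_bound)
  interpret finite_measure M by fact
  show "integrable M (\<lambda>x. B * (1 + (h x)^2))" using h by simp
  show "(\<lambda>x. g x * h x) \<in> borel_measurable M" using assms by measurable
  show "AE x in M. norm (g x * h x) \<le> norm (B * (1 + (h x)^2))"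
  proof (rule AE_I2)
    fix x assume x: "x \<in> space M"
    have B: "0 \<le> B" using g x by (meson abs_ge_zero order_trans)
    have "\<bar>g x\<bar> * \<bar>h x\<bar> \<le> B * (1 + (h x)^2)"
      using g x abs_le_one_plus_square[of "h x"] by (intro mult_mono) auto
    then show "norm (g x * h x) \<le> norm (B * (1 + (h x)^2))"
      using B by (simp add: abs_mult add_nonneg_nonneg)
  qed
qed

text \<open>A bounded \<open>F\<close>-measurable vector is uncorrelated with noise of conditional mean zero:
  expand the inner product in the basis and pull each coordinate of \<open>A\<close> out of the
  conditional expectation.\<close>

lemma integral_inner_cond_mean_zero:
  fixes A e :: "'b \<Rightarrow> 'v::euclidean_space"
  assumes P: "prob_space M" and sub: "subalgebra M F"
    and A: "A \<in> borel_measurable F" and A_bound: "\<forall>\<omega>\<in>space M. norm (A \<omega>) \<le> B"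
    and e: "e \<in> borel_measurable M" and e_sq: "integrable M (\<lambda>x. (norm (e x))^2)"
    and mean0: "\<forall>b\<in>Basis. AE \<omega> in M. real_cond_exp M F (\<lambda>x. e x \<bullet> b) \<omega> = 0"
  shows "integrable M (\<lambda>x. A x \<bullet> e x)" "(\<integral>x. A x \<bullet> e x \<partial>M) = 0"
proof -
  interpret prob_space M by (rule P)
  interpret FS: finite_measure_subalgebra M F
    by (intro finite_measure_subalgebra.intro finite_measure_subalgebra_axioms.intro
        finite_measure_axioms sub)
  have AM[measurable]: "A \<in> borel_measurable M" by (rule measurable_from_subalg[OF sub A])
  note [measurable] = e
  have coord: "integrable M (\<lambda>x. (A x \<bullet> b) * (e x \<bullet> b))" if "b \<in> Basis" for b
  proof (rule integrable_bounded_mult_sq_integrable)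
    show "\<forall>x\<in>space M. \<bar>A x \<bullet> b\<bar> \<le> B"
      using A_bound that by (meson Basis_le_norm order_trans)
    show "integrable M (\<lambda>x. (e x \<bullet> b)^2)"
    proof (rule Bochner_Integration.integrable_bound[OF e_sq])
      show "AE x in M. norm ((e x \<bullet> b)^2) \<le> norm ((norm (e x))^2)"
        using that by (intro AE_I2) (metis Basis_le_norm abs_ge_zero norm_ge_zero norm_power power2_abs power_mono real_norm_def)
    qed measurable
  qed (auto intro: finite_measure_axioms)
  have coord0: "(\<integral>x. (A x \<bullet> b) * (e x \<bullet> b) \<partial>M) = 0" if b: "b \<in> Basis" for b
  proof -
    have Ab: "(\<lambda>x. A x \<bullet> b) \<in> borel_measurable F" using A by measurable
    have "(\<integral>x. (A x \<bullet> b) * (e x \<bullet> b) \<partial>M)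
        = (\<integral>x. (A x \<bullet> b) * real_cond_exp M F (\<lambda>x. e x \<bullet> b) x \<partial>M)"
      by (rule FS.real_cond_exp_intg(2)[symmetric]) (use coord[OF b] Ab in auto)
    also have "\<dots> = (\<integral>x. 0 \<partial>M)"
      by (rule integral_cong_AE)
         (use mean0 b Ab in \<open>auto elim!: AE_mp intro!: measurable_from_subalg[OF sub]\<close>)
    finally show ?thesis by simp
  qed
  have expand: "(\<lambda>x. A x \<bullet> e x) = (\<lambda>x. \<Sum>b\<in>Basis. (A x \<bullet> b) * (e x \<bullet> b))"
    by (rule ext) (rule euclidean_inner)
  show "integrable M (\<lambda>x. A x \<bullet> e x)" unfolding expand using coord by auto
  show "(\<integral>x. A x \<bullet> e x \<partial>M) = 0" unfolding expand using coord coord0 by (simp add: integral_sum)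
qed

lemma integrable_inner_sq_integrable:
  fixes e1 e2 :: "'b \<Rightarrow> 'v::euclidean_space"
  assumes e: "e1 \<in> borel_measurable M" "e2 \<in> borel_measurable M"
    and i1: "integrable M (\<lambda>x. (norm (e1 x))^2)" and i2: "integrable M (\<lambda>x. (norm (e2 x))^2)"
  shows "integrable M (\<lambda>x. e1 x \<bullet> e2 x)"
proof (rule Bochner_Integration.integrable_bound[OF Bochner_Integration.integrable_add[OF i1 i2]])
  show "AE x in M. norm (e1 x \<bullet> e2 x) \<le> norm ((norm (e1 x))^2 + (norm (e2 x))^2)"
  proof (rule AE_I2)
    fix x
    have "2 * (norm (e1 x) * norm (e2 x)) \<le> (norm (e1 x))^2 + (norm (e2 x))^2"
      using sum_squares_bound[of "norm (e1 x)" "norm (e2 x)"] by simp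
    then show "norm (e1 x \<bullet> e2 x) \<le> norm ((norm (e1 x))^2 + (norm (e2 x))^2)"
      using Cauchy_Schwarz_ineq2[of "e1 x" "e2 x"] by (simp add: mult_nonneg_nonneg)
  qed
  show "(\<lambda>x. e1 x \<bullet> e2 x) \<in> borel_measurable M" using e by measurable
qed

lemma integral_sq_norm_noisy_step:
  fixes A e1 e2 :: "'b \<Rightarrow> 'v::euclidean_space"
  assumes P: "prob_space M" and sub: "subalgebra M F"
    and A: "A \<in> borel_measurable F" and A_bound: "\<forall>\<omega>\<in>space M. norm (A \<omega>) \<le> B"
    and e1: "e1 \<in> borel_measurable M" and e2: "e2 \<in> borel_measurable M"
    and mean1: "\<forall>b\<in>Basis. AE \<omega> in M. real_cond_exp M F (\<lambda>x. e1 x \<bullet> b) \<omega> = 0"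
    and mean2: "\<forall>b\<in>Basis. AE \<omega> in M. real_cond_exp M F (\<lambda>x. e2 x \<bullet> b) \<omega> = 0"
    and orth: "AE \<omega> in M. real_cond_exp M F (\<lambda>x. e1 x \<bullet> e2 x) \<omega> = 0"
    and S1: "0 \<le> S1" and S2: "0 \<le> S2"
    and var1: "AE \<omega> in M. nn_cond_exp M F (\<lambda>x. ennreal ((norm (e1 x))^2)) \<omega> \<le> ennreal S1"
    and var2: "AE \<omega> in M. nn_cond_exp M F (\<lambda>x. ennreal ((norm (e2 x))^2)) \<omega> \<le> ennreal S2"
  shows "integrable M (\<lambda>\<omega>. (norm (A \<omega> + c1 *\<^sub>R e1 \<omega> - c2 *\<^sub>R e2 \<omega>))^2)"
    and "(\<integral>\<omega>. (norm (A \<omega> + c1 *\<^sub>R e1 \<omega> - c2 *\<^sub>R e2 \<omega>))^2 \<partial>M)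
       \<le> (\<integral>\<omega>. (norm (A \<omega>))^2 \<partial>M) + c1^2 * S1 + c2^2 * S2"
proof -
  interpret prob_space M by (rule P)
  interpret FS: finite_measure_subalgebra M F
    by (intro finite_measure_subalgebra.intro finite_measure_subalgebra_axioms.intro
        finite_measure_axioms sub)
  have [measurable]: "A \<in> borel_measurable M" by (rule measurable_from_subalg[OF sub A])
  note sq1 = integral_sq_norm_le_cond_bound[OF P sub e1 S1 var1]
  note sq2 = integral_sq_norm_le_cond_bound[OF P sub e2 S2 var2]
  note cross1 = integral_inner_cond_mean_zero[OF P sub A A_bound e1 sq1(1) mean1]
  note cross2 = integral_inner_cond_mean_zero[OF P sub A A_bound e2 sq2(1) mean2]
  have iA: "integrable M (\<lambda>x. (norm (A x))^2)"
    by (rule integrable_const_bound[where B="B^2"])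
       (use A_bound in \<open>auto intro!: power_mono\<close>)
  have i12: "integrable M (\<lambda>x. e1 x \<bullet> e2 x)"
    by (rule integrable_inner_sq_integrable[OF e1 e2 sq1(1) sq2(1)])
  have o12: "(\<integral>x. e1 x \<bullet> e2 x \<partial>M) = 0"
  proof -
    have "(\<integral>x. e1 x \<bullet> e2 x \<partial>M) = (\<integral>x. real_cond_exp M F (\<lambda>x. e1 x \<bullet> e2 x) x \<partial>M)"
      by (rule FS.real_cond_exp_int(2)[OF i12, symmetric])
    also have "\<dots> = (\<integral>x. 0 \<partial>M)" by (rule integral_cong_AE) (use orth in auto)
    finally show ?thesis by simp
  qed
  define T where "T x = (norm (A x))^2 + c1^2 * (norm (e1 x))^2 + c2^2 * (norm (e2 x))^2
      + 2 * c1 * (A x \<bullet> e1 x) - 2 * c2 * (A x \<bullet> e2 x) - 2 * c1 * c2 * (e1 x \<bullet> e2 x)" for x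
  have expand: "(\<lambda>x. (norm (A x + c1 *\<^sub>R e1 x - c2 *\<^sub>R e2 x))^2) = T"
    unfolding T_def power2_norm_eq_inner
    by (rule ext) (simp add: inner_add_left inner_add_right inner_diff_left inner_diff_right
        inner_commute[of "e1 _" "A _"] inner_commute[of "e2 _" "A _"] inner_commute[of "e2 _" "e1 _"]
        power2_eq_square algebra_simps)
  have iT: "integrable M T" unfolding T_def using iA sq1(1) sq2(1) cross1(1) cross2(1) i12 by auto
  then show "integrable M (\<lambda>\<omega>. (norm (A \<omega> + c1 *\<^sub>R e1 \<omega> - c2 *\<^sub>R e2 \<omega>))^2)"
    unfolding expand .
  have "(\<integral>x. T x \<partial>M) = (\<integral>x. (norm (A x))^2 \<partial>M) + c1^2 * (\<integral>x. (norm (e1 x))^2 \<partial>M)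
      + c2^2 * (\<integral>x. (norm (e2 x))^2 \<partial>M)"
    unfolding T_def using iA sq1(1) sq2(1) cross1 cross2 i12 o12 by simp
  also have "\<dots> \<le> (\<integral>x. (norm (A x))^2 \<partial>M) + c1^2 * S1 + c2^2 * S2"
    using sq1(2) sq2(2) by (intro add_mono mult_left_mono) auto
  finally show "(\<integral>\<omega>. (norm (A \<omega> + c1 *\<^sub>R e1 \<omega> - c2 *\<^sub>R e2 \<omega>))^2 \<partial>M)
       \<le> (\<integral>\<omega>. (norm (A \<omega>))^2 \<partial>M) + c1^2 * S1 + c2^2 * S2"
    unfolding expand .
qed

section \<open>Scalar recursions and the step-size schedule\<close>

lemma absorb_half_contraction:
  fixes x e e' G D :: real
  assumes x0: "x > 0" and x1: "x \<le> 1" and e0: "e \<ge> 0" and G0: "G \<ge> 0" and D0: "D \<ge> 0"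
    and h: "e' \<le> (1 + x / 2) * ((1 - x) * e + G) + (1 + 1 / (x / 2)) * D"
  shows "e' \<le> (1 - x / 2) * e + 2 * G + 3 * D / x"
proof -
  have a: "(1 + x / 2) * (1 - x) * e \<le> (1 - x / 2) * e"
  proof -
    have "(1 + x / 2) * (1 - x) \<le> 1 - x / 2" using x0 by (simp add: algebra_simps)
    then show ?thesis using e0 by (simp add: mult_right_mono)
  qed
  have b: "(1 + x / 2) * G \<le> 2 * G" using x1 G0 by (simp add: mult_right_mono)
  have c: "(1 + 1 / (x / 2)) * D \<le> 3 * D / x"
  proof -
    have "1 + 1 / (x / 2) \<le> 3 / x" using x0 x1 by (simp add: field_simps)
    then show ?thesis using D0 by (metis mult_right_mono times_divide_eq_left)
  qed
  have "(1 + x / 2) * ((1 - x) * e + G) = (1 + x / 2) * (1 - x) * e + (1 + x / 2) * G"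
    by (metis distrib_left mult.assoc)
  then show ?thesis using h a b c by linarith
qed

lemma inverse_le_of_sq_increment:
  fixes v v' \<delta> :: real
  assumes v: "v > 0" and vv: "v \<le> v'" and sq: "v'^2 = v^2 + \<delta>" and d: "\<delta> \<ge> 0"
  shows "1 / v - \<delta> / (2 * v^3) \<le> 1 / v'"
proof -
  have v'0: "v' > 0" using v vv by simp
  have "(v' - v) * (v' + v) = \<delta>" using sq by (simp add: power2_eq_square algebra_simps)
  then have e1: "v' - v = \<delta> / (v' + v)" using v v'0 by (simp add: field_simps)
  have "\<delta> / (v' + v) \<le> \<delta> / (2 * v)" using v vv d by (intro divide_left_mono) auto
  then have h1: "v' - v \<le> \<delta> / (2 * v)" using e1 by simp
  have e2: "1 / v - 1 / v' = (v' - v) / (v * v')" using v v'0 by (simp add: field_simps)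
  have "(v' - v) / (v * v') \<le> (v' - v) / (v * v)"
    using v vv by (intro divide_left_mono mult_left_mono mult_pos_pos) auto
  also have "\<dots> \<le> (\<delta> / (2 * v)) / (v * v)" using h1 v by (intro divide_right_mono) auto
  also have "\<dots> = \<delta> / (2 * v^3)" by (simp add: power3_eq_cube)
  finally show ?thesis using e2 by linarith
qed

locale quartic_schedule =
  fixes u :: "nat \<Rightarrow> real" and \<delta> :: real
  assumes u_pow4: "(u k)^4 = 1 + \<delta> * real k" and u_nonneg: "0 \<le> u k" and delta_pos: "0 < \<delta>"
begin

lemma u_ge_1: "1 \<le> u k"
proof -
  have "1 ^ 4 \<le> (u k)^4" using delta_pos by (simp add: u_pow4)
  then show ?thesis using u_nonneg[of k] power_mono_iff[of 1 "u k" 4] by simp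
qed

lemma u_pos: "0 < u k"
  using u_ge_1[of k] by simp

lemma u_Suc_pow4: "(u (Suc k))^4 = (u k)^4 + \<delta>"
  by (simp add: u_pow4 algebra_simps)

lemma u_mono: "k \<le> k' \<Longrightarrow> u k \<le> u k'"
  using delta_pos u_nonneg[of k] u_nonneg[of k'] power_mono_iff[of "u k" "u k'" 4]
  by (simp add: u_pow4 mult_left_mono)

lemma u_Suc_diff_le: "u (Suc k) - u k \<le> \<delta> / (u k)^3"
proof -
  define x where "x = u k"
  define y where "y = u (Suc k)"
  have xy: "x \<le> y" using u_mono[of k "Suc k"] by (simp add: x_def y_def)
  have x0: "0 < x" using u_pos by (simp add: x_def)
  have "(y - x) * (y^3 + y^2 * x + y * x^2 + x^3) = y^4 - x^4"
    by (simp add: algebra_simps power2_eq_square power3_eq_cube power4_eq_xxxx)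
  also have "\<dots> = \<delta>" using u_Suc_pow4[of k] by (simp add: x_def y_def)
  finally have e: "(y - x) * (y^3 + y^2 * x + y * x^2 + x^3) = \<delta>" .
  have "x^3 \<le> y^3 + y^2 * x + y * x^2 + x^3" using xy x0 by simp
  then have "(y - x) * x^3 \<le> \<delta>" using e xy by (metis diff_ge_0_iff_ge mult_left_mono)
  then show ?thesis using x0 by (simp add: x_def y_def field_simps)
qed

lemma eventually_ge_u: "eventually (\<lambda>k. c \<le> u k) sequentially"
proof -
  obtain n :: nat where n: "c^4 / \<delta> < real n" using reals_Archimedean2 by blast
  show ?thesis
  proof (rule eventually_sequentiallyI[of n])
    fix k assume "n \<le> k"
    then have "c^4 / \<delta> \<le> real k" using n by linarith
    then have "c^4 \<le> \<delta> * real k" using delta_pos by (simp add: field_simps)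
    also have "\<dots> \<le> (u k)^4" by (simp add: u_pow4)
    finally have "c^4 \<le> (u k)^4" .
    then show "c \<le> u k"
      using u_nonneg[of k] power_mono_iff[of "\<bar>c\<bar>" "u k" 4] by (simp add: power_abs)
  qed
qed

lemma sqrt_le_u_sq: "sqrt (min 1 \<delta>) * sqrt (real k + 1) \<le> (u k)^2"
proof -
  have "min 1 \<delta> * (real k + 1) \<le> 1 + \<delta> * real k"
  proof -
    have "min 1 \<delta> * real k \<le> \<delta> * real k" by (intro mult_right_mono) auto
    then show ?thesis by (simp add: algebra_simps)
  qed
  then have "sqrt (min 1 \<delta> * (real k + 1)) \<le> sqrt (1 + \<delta> * real k)" by (rule real_sqrt_le_mono)
  also have "sqrt (1 + \<delta> * real k) = (u k)^2"
    by (rule real_sqrt_unique) (simp_all add: u_pow4 flip: power_mult)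
  finally show ?thesis by (simp add: real_sqrt_mult)
qed

lemma div_u_sq_le_div_sqrt:
  assumes "x \<le> C / (u k)^2"
  shows "x \<le> max C 0 / sqrt (min 1 \<delta>) / sqrt (real k + 1)"
proof -
  have m: "0 < sqrt (min 1 \<delta>) * sqrt (real k + 1)" using delta_pos by simp
  have "x \<le> max C 0 / (u k)^2"
    using assms u_pos[of k] by (smt (verit) divide_right_mono zero_le_power2)
  also have "\<dots> \<le> max C 0 / (sqrt (min 1 \<delta>) * sqrt (real k + 1))"
    using sqrt_le_u_sq[of k] m u_pos[of k] by (intro divide_left_mono) auto
  finally show ?thesis by simp
qed

text \<open>With \<open>v = (u k)\<^sup>2\<close>, one step maps the bound \<open>K / v\<close> to \<open>K / v - (K a - c) / v\<^sup>3\<close>,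
  and \<open>K a - c \<ge> K \<delta> / 2\<close> is what \<open>1 / v - 1 / v' \<le> \<delta> / (2 v\<^sup>3)\<close> requires.\<close>

lemma decay_bound_step:
  fixes x x' :: real
  assumes K: "0 \<le> K" "c \<le> K * (a - \<delta> / 2)" and small: "a / (u k)^4 \<le> 1"
    and x: "x \<le> K / (u k)^2" and x': "x' \<le> (1 - a / (u k)^4) * x + c / (u k)^6"
  shows "x' \<le> K / (u (Suc k))^2"
proof -
  define v where "v = (u k)^2"
  define v' where "v' = (u (Suc k))^2"
  have v0: "0 < v" using u_pos[of k] by (simp add: v_def)
  have vsq: "v'^2 = v^2 + \<delta>" using u_Suc_pow4 by (simp add: v_def v'_def flip: power_mult)
  have vv: "v \<le> v'" using u_mono[of k "Suc k"] u_nonneg[of k] by (simp add: v_def v'_def power_mono)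
  have u4: "(u k)^4 = v^2" and u6: "(u k)^6 = v^3" by (simp_all add: v_def flip: power_mult)
  have coef: "0 \<le> 1 - a / v^2" using small unfolding u4 by simp
  have "x \<le> K / v" using x by (simp add: v_def)
  have "x' \<le> (1 - a / v^2) * x + c / v^3" using x' unfolding u4 u6 .
  also have "\<dots> \<le> (1 - a / v^2) * (K / v) + c / v^3"
    using \<open>x \<le> K / v\<close> coef by (intro add_right_mono mult_left_mono)
  also have "\<dots> = K / v - (K * a - c) / v^3"
    using v0 by (simp add: field_simps power2_eq_square power3_eq_cube)
  also have "\<dots> \<le> K / v - (K * (\<delta> / 2)) / v^3"
  proof -
    have "K * (\<delta> / 2) \<le> K * a - c" using K(2) by (simp add: algebra_simps)
    then have "(K * (\<delta> / 2)) / v^3 \<le> (K * a - c) / v^3" using v0 by (intro divide_right_mono) auto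
    then show ?thesis by linarith
  qed
  also have "\<dots> = K * (1 / v - \<delta> / (2 * v^3))" by (simp add: field_simps)
  also have "\<dots> \<le> K * (1 / v')"
    using inverse_le_of_sq_increment[OF v0 vv vsq] delta_pos K by (intro mult_left_mono) auto
  finally show ?thesis by (simp add: v'_def)
qed

lemma recursion_bound:
  fixes e :: "nat \<Rightarrow> real"
  assumes a: "5 / 8 * \<delta> \<le> a" and c: "0 \<le> c"
    and small: "\<forall>k\<ge>k0. a / (u k)^4 \<le> 1"
    and rec: "\<forall>k\<ge>k0. e (Suc k) \<le> (1 - a / (u k)^4) * e k + c / (u k)^6"
  shows "\<exists>K. \<forall>k\<ge>k0. e k \<le> K / (u k)^2"
proof -
  define K where "K = max (e k0 * (u k0)^2) (8 * c / \<delta>)"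
  have K8: "8 * c / \<delta> \<le> K" by (simp add: K_def)
  moreover have "0 \<le> 8 * c / \<delta>" using c delta_pos by simp
  ultimately have K0: "0 \<le> K" by linarith
  have "c \<le> K * (\<delta> / 8)" using K8 delta_pos by (simp add: field_simps)
  also have "\<dots> \<le> K * (a - \<delta> / 2)" using K0 a by (intro mult_left_mono) auto
  finally have cK: "c \<le> K * (a - \<delta> / 2)" .
  have "e k \<le> K / (u k)^2" if "k0 \<le> k" for k
    using that
  proof (induction k rule: dec_induct)
    case base
    show ?case using u_pos[of k0] by (simp add: K_def field_simps)
  next
    case (step k)
    then show ?case using small rec by (intro decay_bound_step[OF K0 cK]) auto
  qed
  then show ?thesis by blast
qed

end

lemma powr_quarter_power: "0 < (s::real) \<Longrightarrow> (s powr (1 / 4))^n = s powr (real n / 4)"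
  by (simp add: powr_realpow[symmetric] powr_powr)

lemma quartic_schedule_powr:
  assumes "0 < \<delta>" shows "quartic_schedule (\<lambda>k. (1 + \<delta> * real k) powr (1 / 4)) \<delta>"
proof
  fix k
  have pos: "0 < 1 + \<delta> * real k" using assms by (simp add: add_pos_nonneg)
  from powr_quarter_power[OF pos, of 4]
  show "((1 + \<delta> * real k) powr (1 / 4))^4 = 1 + \<delta> * real k" using pos by simp
qed (use assms in simp_all)

lemma powr_neg_three_quarters:
  assumes "0 < (s::real)" shows "s powr (- 3 / 4) = 1 / (s powr (1 / 4))^3"
proof -
  have "s powr (- 3 / 4) = inverse (s powr (3 / 4))" using powr_minus[of s "3 / 4"] by simp
  also have "s powr (3 / 4) = (s powr (1 / 4))^3" using powr_quarter_power[OF assms, of 3] by simp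
  finally show ?thesis by (simp add: inverse_eq_divide)
qed

section \<open>Projected stochastic gradient descent with increasing penalty\<close>

locale penalized_sgd = penalized_operator Ph Lm \<rho> \<mu> Lc + quartic_schedule u \<delta>
  for Ph :: "'a::euclidean_space^'n::finite \<Rightarrow> 'a^'n" and Lm \<rho> \<mu> Lc u \<delta> +
  fixes P :: "('a^'n) set" and w :: 'a and \<eta>0 \<gamma>0 :: real and \<eta> \<gamma> :: "nat \<Rightarrow> real"
    and M :: "'b measure" and F :: "nat \<Rightarrow> 'b measure" and \<kappa> :: nat
    and \<epsilon>1 \<epsilon>2 :: "nat \<Rightarrow> 'b \<Rightarrow> 'a^'n" and \<sigma>1 \<sigma>2 :: real and W :: "nat \<Rightarrow> 'b \<Rightarrow> 'a^'n"
  assumes P_closed: "closed P" and P_convex: "convex P" and P_bounded: "bounded P"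
    and w_interior: "vec w \<in> interior P"
    and sum_Ph_w: "(\<Sum>i\<in>UNIV. Ph (vec w) $ i) = 0"
    and eta0_pos: "0 < \<eta>0" and gamma0_pos: "0 < \<gamma>0"
    and eta_eq: "\<eta> k = \<eta>0 / (u k)^4" and gamma_eq: "\<gamma> k = \<gamma>0 / (u k)^3"
    and delta_le: "\<delta> \<le> 4 / 5 * \<mu> * \<eta>0"
    and prob: "prob_space M" and subalgebra: "subalgebra M (F k)"
    and filtration: "subalgebra (F (Suc k)) (F k)"
    and W_start_measurable: "W \<kappa> \<in> borel_measurable (F \<kappa>)"
    and W_start_in: "\<And>\<omega>. \<omega> \<in> space M \<Longrightarrow> W \<kappa> \<omega> \<in> P"
    and W_step: "\<And>k \<omega>. \<kappa> \<le> k \<Longrightarrow> \<omega> \<in> space M \<Longrightarrow> W (Suc k) \<omega> = closest_point P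
        (W k \<omega> - \<eta> k *\<^sub>R (Ph (W k \<omega>) + (\<gamma> k / \<eta> k) *\<^sub>R Lhat Lm (W k \<omega>))
          + \<gamma> k *\<^sub>R \<epsilon>1 k \<omega> - \<eta> k *\<^sub>R \<epsilon>2 k \<omega>)"
    and noise1_measurable: "\<And>k. \<kappa> \<le> k \<Longrightarrow> \<epsilon>1 k \<in> borel_measurable (F (Suc k))"
    and noise2_measurable: "\<And>k. \<kappa> \<le> k \<Longrightarrow> \<epsilon>2 k \<in> borel_measurable (F (Suc k))"
    and noise1_mean: "\<And>k. \<kappa> \<le> k \<Longrightarrow>
        \<forall>b\<in>Basis. AE \<omega> in M. real_cond_exp M (F k) (\<lambda>x. \<epsilon>1 k x \<bullet> b) \<omega> = 0"
    and noise2_mean: "\<And>k. \<kappa> \<le> k \<Longrightarrow>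
        \<forall>b\<in>Basis. AE \<omega> in M. real_cond_exp M (F k) (\<lambda>x. \<epsilon>2 k x \<bullet> b) \<omega> = 0"
    and noise_orth: "\<And>k. \<kappa> \<le> k \<Longrightarrow>
        AE \<omega> in M. real_cond_exp M (F k) (\<lambda>x. \<epsilon>1 k x \<bullet> \<epsilon>2 k x) \<omega> = 0"
    and sigma1_nonneg: "0 \<le> \<sigma>1" and sigma2_nonneg: "0 \<le> \<sigma>2"
    and noise1_var: "\<And>k. \<kappa> \<le> k \<Longrightarrow>
        AE \<omega> in M. nn_cond_exp M (F k) (\<lambda>x. ennreal ((norm (\<epsilon>1 k x))^2)) \<omega> \<le> ennreal \<sigma>1"
    and noise2_var: "\<And>k. \<kappa> \<le> k \<Longrightarrow>
        AE \<omega> in M. nn_cond_exp M (F k) (\<lambda>x. ennreal ((norm (\<epsilon>2 k x))^2)) \<omega> \<le> ennreal \<sigma>2"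
begin

lemma eta_pos: "0 < \<eta> k"
  using eta0_pos u_pos[of k] by (simp add: eta_eq)

lemma penalty_eq: "\<gamma> k / \<eta> k = \<gamma>0 / \<eta>0 * u k"
  using u_pos[of k] eta0_pos by (simp add: eta_eq gamma_eq field_simps power3_eq_cube power4_eq_xxxx)

lemma penalty_pos: "0 < \<gamma> k / \<eta> k"
  using gamma0_pos eta0_pos u_pos[of k] by (simp add: penalty_eq)

definition grad_step :: "nat \<Rightarrow> 'a^'n \<Rightarrow> 'a^'n" where
  "grad_step k X = X - \<eta> k *\<^sub>R (Ph X + (\<gamma> k / \<eta> k) *\<^sub>R Lhat Lm X)"

definition target :: "nat \<Rightarrow> 'a^'n" where
  "target k = penalized_root (\<gamma> k / \<eta> k)"

lemma W_Suc:
  "\<kappa> \<le> k \<Longrightarrow> \<omega> \<in> space M \<Longrightarrow>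
    W (Suc k) \<omega> = closest_point P (grad_step k (W k \<omega>) + \<gamma> k *\<^sub>R \<epsilon>1 k \<omega> - \<eta> k *\<^sub>R \<epsilon>2 k \<omega>)"
  unfolding grad_step_def by (rule W_step)

lemma grad_step_target: "grad_step k (target k) = target k"
  using penalized_root_eq[of "\<gamma> k / \<eta> k"] penalty_pos[of k]
  by (simp add: grad_step_def target_def)

lemma grad_step_contraction:
  assumes "\<eta> k * (Lc + \<gamma> k / \<eta> k * Lnorm)^2 \<le> \<mu>"
  shows "(norm (grad_step k X - grad_step k Y))^2 \<le> (1 - \<eta> k * \<mu>) * (norm (X - Y))^2"
  unfolding grad_step_def
  using assms eta_pos[of k] penalty_pos[of k] by (intro penalized_step_contraction) auto

lemma continuous_on_grad_step: "continuous_on UNIV (grad_step k)"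
  unfolding grad_step_def
  by (intro continuous_intros continuous_on_Ph linear_continuous_on bounded_linear_Lhat)

lemma P_nonempty: "P \<noteq> {}"
  using w_interior interior_subset by blast

lemma iterate_in_P: "\<kappa> \<le> k \<Longrightarrow> \<omega> \<in> space M \<Longrightarrow> W k \<omega> \<in> P"
proof (induction k rule: dec_induct)
  case base then show ?case by (rule W_start_in)
next
  case (step k) then show ?case
    using closest_point_in_set[OF P_closed P_nonempty] by (simp add: W_Suc)
qed

lemma iterate_measurable: "\<kappa> \<le> k \<Longrightarrow> W k \<in> borel_measurable (F k)"
proof (induction k rule: dec_induct)
  case base then show ?case by (rule W_start_measurable)
next
  case (step k)
  have [measurable]: "W k \<in> borel_measurable (F (Suc k))"
    by (rule measurable_from_subalg[OF filtration step.IH])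
  have [measurable]: "(\<lambda>\<omega>. grad_step k (W k \<omega>)) \<in> borel_measurable (F (Suc k))"
    by (rule borel_measurable_continuous_on[OF continuous_on_grad_step]) measurable
  note [measurable] = noise1_measurable[OF step.hyps(1)] noise2_measurable[OF step.hyps(1)]
  have "(\<lambda>\<omega>. closest_point P (grad_step k (W k \<omega>) + \<gamma> k *\<^sub>R \<epsilon>1 k \<omega> - \<eta> k *\<^sub>R \<epsilon>2 k \<omega>))
      \<in> borel_measurable (F (Suc k))"
    by (rule borel_measurable_continuous_on[OF continuous_on_closest_point[OF P_convex P_closed P_nonempty]])
       measurable
  moreover have "space (F (Suc k)) = space M"
    using subalgebra by (auto simp: subalgebra_def)
  ultimately show ?case
    using W_Suc[OF step.hyps(1)] by (subst measurable_cong) auto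
qed

lemma iterate_sq_integrable:
  assumes "\<kappa> \<le> k"
  shows "integrable M (\<lambda>\<omega>. (norm (W k \<omega> - V))^2)"
proof -
  interpret prob_space M by (rule prob)
  obtain R where R: "\<forall>x\<in>P. norm x \<le> R" using P_bounded bounded_iff by blast
  have [measurable]: "W k \<in> borel_measurable M"
    by (rule measurable_from_subalg[OF subalgebra iterate_measurable[OF assms]])
  have "norm (W k \<omega> - V) \<le> R + norm V" if "\<omega> \<in> space M" for \<omega>
    using R iterate_in_P[OF assms that] by (smt (verit) norm_triangle_ineq4)
  then show ?thesis
    by (intro integrable_const_bound[where B="(R + norm V)^2"]) (auto intro!: power_mono)
qed

lemma target_dist: "norm (target k - vec w) \<le> (1 + Lc / \<mu>) * norm (Ph (vec w)) / (\<gamma>0 / \<eta>0 * \<rho> 2) / u k"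
  using penalized_root_dist[OF penalty_pos sum_Ph_w, of k] by (simp add: target_def penalty_eq mult_ac)

lemma Ph_target_bounded: "\<exists>B. \<forall>k. norm (Ph (target k)) \<le> B"
proof -
  define c where "c = (1 + Lc / \<mu>) * norm (Ph (vec w)) / (\<gamma>0 / \<eta>0 * \<rho> 2)"
  have c0: "0 \<le> c" using mu_pos mu_le_Lc gamma0_pos eta0_pos rho2_pos by (simp add: c_def)
  have "norm (Ph (target k)) \<le> norm (Ph (vec w)) + Lc * c" for k
  proof -
    have "norm (Ph (target k)) \<le> norm (Ph (vec w)) + norm (Ph (target k) - Ph (vec w))"
      by (metis add.commute norm_triangle_sub)
    also have "norm (Ph (target k) - Ph (vec w)) \<le> Lc * norm (target k - vec w)" by (rule lipschitz)
    also have "norm (target k - vec w) \<le> c / u k" using target_dist by (simp add: c_def)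
    also have "c / u k \<le> c" using c0 u_ge_1[of k] by (simp add: divide_le_eq mult_le_cancel_left1)
    finally show ?thesis using mu_pos mu_le_Lc by (simp add: mult_left_mono)
  qed
  then show ?thesis by blast
qed

text \<open>The penalty grows like \<open>u k\<close> and its increments like \<open>1 / (u k)\<^sup>3\<close>: the residual in
  the drift bound is \<open>O(1 / (u k)\<^sup>4)\<close>, and dividing by the penalty gives \<open>O(1 / (u k)\<^sup>5)\<close>.\<close>

lemma target_drift: "\<exists>c. \<forall>k. norm (target (Suc k) - target k) \<le> c / (u k)^5"
proof -
  obtain B where B: "\<And>k. norm (Ph (target k)) \<le> B" using Ph_target_bounded by blast
  have B0: "0 \<le> B" using B[of 0] norm_ge_zero order_trans by blast
  define b0 where "b0 = \<gamma>0 / \<eta>0"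
  have b0: "0 < b0" using gamma0_pos eta0_pos by (simp add: b0_def)
  have "norm (target (Suc k) - target k) \<le> (1 + Lc / \<mu>) * (\<delta> * B / (b0 * \<rho> 2)) / (u k)^5" for k
  proof -
    define b where "b = b0 * u k"
    define b' where "b' = b0 * u (Suc k)"
    have b: "0 < b" "b \<le> b'" using b0 u_pos[of k] u_mono[of k "Suc k"] by (auto simp: b_def b'_def)
    have incr: "b' - b \<le> b0 * (\<delta> / (u k)^3)"
      using mult_left_mono[OF u_Suc_diff_le[of k], of b0] b0 by (simp add: b_def b'_def right_diff_distrib)
    have "(b' - b) * norm (Ph (target k)) / (b * b' * \<rho> 2)
        \<le> b0 * (\<delta> / (u k)^3) * B / (b0 * u k * (b0 * u k) * \<rho> 2)"
    proof (rule frac_le)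
      show "(b' - b) * norm (Ph (target k)) \<le> b0 * (\<delta> / (u k)^3) * B"
        using incr B[of k] b by (intro mult_mono) auto
      show "0 < b0 * u k * (b0 * u k) * \<rho> 2" using b0 u_pos[of k] rho2_pos by simp
      show "b0 * u k * (b0 * u k) * \<rho> 2 \<le> b * b' * \<rho> 2"
        using b rho2_pos by (intro mult_right_mono mult_mono) (auto simp: b_def)
    qed (use b0 delta_pos u_pos[of k] B0 in simp)
    also have "\<dots> = \<delta> * B / (b0 * \<rho> 2) / (u k)^5"
      using b0 u_pos[of k] by (simp add: field_simps power2_eq_square power3_eq_cube
          numeral_eq_Suc del: One_nat_def)
    finally have "(b' - b) * norm (Ph (target k)) / (b * b' * \<rho> 2) \<le> \<delta> * B / (b0 * \<rho> 2) / (u k)^5" .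
    moreover have "norm (target (Suc k) - target k)
        \<le> (1 + Lc / \<mu>) * ((b' - b) * norm (Ph (target k)) / (b * b' * \<rho> 2))"
      using penalized_root_drift[OF b] by (simp add: target_def penalty_eq b_def b'_def b0_def)
    ultimately show ?thesis
      using mu_pos mu_le_Lc by (smt (verit) divide_nonneg_nonneg mult_left_mono times_divide_eq_right)
  qed
  then show ?thesis by blast
qed

lemma eventually_target_in_P: "eventually (\<lambda>k. target k \<in> P) sequentially"
proof -
  obtain r where r: "0 < r" "cball (vec w) r \<subseteq> P" using w_interior mem_interior_cball by blast
  define c where "c = (1 + Lc / \<mu>) * norm (Ph (vec w)) / (\<gamma>0 / \<eta>0 * \<rho> 2)"
  show ?thesis
    using eventually_ge_u[of "c / r"]
  proof eventually_elim
    case (elim k)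
    then have "c / u k \<le> r" using r(1) u_pos[of k] by (simp add: field_simps)
    then have "dist (vec w) (target k) \<le> r"
      using target_dist[of k] by (simp add: c_def dist_norm norm_minus_commute)
    then show ?case using r(2) by auto
  qed
qed

lemma eventually_step_small:
  "eventually (\<lambda>k. \<eta> k * \<mu> \<le> 1 \<and> \<eta> k * (Lc + \<gamma> k / \<eta> k * Lnorm)^2 \<le> \<mu>) sequentially"
  using eventually_ge_u[of "max (\<eta>0 * \<mu>) (\<eta>0 * (Lc + \<gamma>0 / \<eta>0 * Lnorm)^2 / \<mu>)"]
proof eventually_elim
  case (elim k)
  define L' where "L' = Lc + \<gamma>0 / \<eta>0 * Lnorm"
  have u1: "1 \<le> u k" by (rule u_ge_1)
  have u_le: "u k \<le> (u k)^2" "(u k)^2 \<le> (u k)^4"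
    using u1 by (auto intro: power_increasing[of 1 2 "u k", simplified] power_increasing)
  have "\<eta>0 * \<mu> \<le> (u k)^4" using elim u_le by simp
  then have "\<eta> k * \<mu> \<le> 1" using u_pos[of k] by (simp add: eta_eq field_simps)
  moreover have "\<eta> k * (Lc + \<gamma> k / \<eta> k * Lnorm)^2 \<le> \<mu>"
  proof -
    have L0: "0 \<le> Lc" "0 \<le> \<gamma>0 / \<eta>0 * Lnorm"
      using mu_pos mu_le_Lc gamma0_pos eta0_pos Lnorm_nonneg by auto
    have "Lc \<le> u k * Lc" using mult_right_mono[OF u1 L0(1)] by simp
    then have "Lc + \<gamma> k / \<eta> k * Lnorm \<le> u k * L'"
      by (simp add: penalty_eq L'_def algebra_simps)
    then have "(Lc + \<gamma> k / \<eta> k * Lnorm)^2 \<le> (u k * L')^2"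
      using L0 mult_nonneg_nonneg[OF less_imp_le[OF penalty_pos[of k]] Lnorm_nonneg]
      by (intro power_mono) auto
    then have "\<eta> k * (Lc + \<gamma> k / \<eta> k * Lnorm)^2 \<le> \<eta> k * (u k * L')^2"
      using eta_pos[of k] by (simp add: mult_left_mono)
    also have "\<dots> = \<eta>0 * L'^2 / (u k)^2"
      using u_pos[of k] by (simp add: eta_eq field_simps power_mult_distrib power2_eq_square power4_eq_xxxx)
    also have "\<dots> \<le> \<mu>"
    proof -
      have "\<eta>0 * L'^2 \<le> \<mu> * u k" using elim mu_pos by (simp add: L'_def field_simps)
      also have "\<dots> \<le> \<mu> * (u k)^2" using u_le mu_pos by simp
      finally show ?thesis using u_pos[of k] by (simp add: field_simps)
    qed
    finally show ?thesis .
  qed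
  ultimately show ?case by simp
qed

lemma W_Suc_dist_le:
  assumes "\<kappa> \<le> k" "\<omega> \<in> space M" "Z \<in> P"
  shows "norm (W (Suc k) \<omega> - Z)
    \<le> norm ((grad_step k (W k \<omega>) - Z) + \<gamma> k *\<^sub>R \<epsilon>1 k \<omega> - \<eta> k *\<^sub>R \<epsilon>2 k \<omega>)"
proof -
  let ?V = "grad_step k (W k \<omega>) + \<gamma> k *\<^sub>R \<epsilon>1 k \<omega> - \<eta> k *\<^sub>R \<epsilon>2 k \<omega>"
  have "norm (W (Suc k) \<omega> - Z) = dist (closest_point P ?V) (closest_point P Z)"
    using assms by (simp add: W_Suc closest_point_self dist_norm)
  also have "\<dots> \<le> dist ?V Z" by (rule closest_point_lipschitz[OF P_convex P_closed P_nonempty])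
  finally show ?thesis by (simp add: dist_norm algebra_simps)
qed

definition tracking_error :: "nat \<Rightarrow> real" where
  "tracking_error k = (\<integral>\<omega>. (norm (W k \<omega> - target k))^2 \<partial>M)"

lemma tracking_error_nonneg: "0 \<le> tracking_error k"
  unfolding tracking_error_def by simp

lemma expected_sq_dist_after_step:
  assumes k: "\<kappa> \<le> k" and target_in: "target k \<in> P"
    and small: "\<eta> k * (Lc + \<gamma> k / \<eta> k * Lnorm)^2 \<le> \<mu>"
  shows "(\<integral>\<omega>. (norm (W (Suc k) \<omega> - target k))^2 \<partial>M)
    \<le> (1 - \<eta> k * \<mu>) * tracking_error k + (\<gamma> k)^2 * \<sigma>1 + (\<eta> k)^2 * \<sigma>2"
proof -
  interpret prob_space M by (rule prob)
  define A where "A \<omega> = grad_step k (W k \<omega>) - target k" for \<omega>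
  have A_meas: "A \<in> borel_measurable (F k)"
    unfolding A_def using borel_measurable_continuous_on[OF continuous_on_grad_step iterate_measurable[OF k]]
    by measurable
  have A_contr: "(norm (A \<omega>))^2 \<le> (1 - \<eta> k * \<mu>) * (norm (W k \<omega> - target k))^2" for \<omega>
    using grad_step_contraction[OF small, of "W k \<omega>" "target k"] by (simp add: A_def grad_step_target)
  obtain R where R: "\<forall>x\<in>P. norm x \<le> R" using P_bounded bounded_iff by blast
  have A_bound: "\<forall>\<omega>\<in>space M. norm (A \<omega>) \<le> R + norm (target k)"
  proof
    fix \<omega> assume \<omega>: "\<omega> \<in> space M"
    have "(1 - \<eta> k * \<mu>) * (norm (W k \<omega> - target k))^2 \<le> 1 * (norm (W k \<omega> - target k))^2"
      using eta_pos[of k] mu_pos by (intro mult_right_mono) auto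
    then have "(norm (A \<omega>))^2 \<le> (norm (W k \<omega> - target k))^2"
      using A_contr[of \<omega>] by linarith
    then have "norm (A \<omega>) \<le> norm (W k \<omega> - target k)" by (simp add: power2_le_iff_abs_le)
    also have "\<dots> \<le> R + norm (target k)"
      using R iterate_in_P[OF k \<omega>] by (smt (verit) norm_triangle_ineq4)
    finally show "norm (A \<omega>) \<le> R + norm (target k)" .
  qed
  have [measurable]: "A \<in> borel_measurable M" by (rule measurable_from_subalg[OF subalgebra A_meas])
  have iA: "integrable M (\<lambda>\<omega>. (norm (A \<omega>))^2)"
    by (rule integrable_const_bound[where B="(R + norm (target k))^2"])
       (use A_bound in \<open>auto intro!: power_mono\<close>)
  note noise = integral_sq_norm_noisy_step[OF prob subalgebra A_meas A_bound
      measurable_from_subalg[OF subalgebra noise1_measurable[OF k]]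
      measurable_from_subalg[OF subalgebra noise2_measurable[OF k]]
      noise1_mean[OF k] noise2_mean[OF k] noise_orth[OF k] sigma1_nonneg sigma2_nonneg
      noise1_var[OF k] noise2_var[OF k], of "\<gamma> k" "\<eta> k"]
  have "(\<integral>\<omega>. (norm (A \<omega>))^2 \<partial>M) \<le> (\<integral>\<omega>. (1 - \<eta> k * \<mu>) * (norm (W k \<omega> - target k))^2 \<partial>M)"
    by (rule integral_mono[OF iA]) (use iterate_sq_integrable[OF k] A_contr in auto)
  then have contr: "(\<integral>\<omega>. (norm (A \<omega>))^2 \<partial>M) \<le> (1 - \<eta> k * \<mu>) * tracking_error k"
    by (simp add: tracking_error_def)
  have "(\<integral>\<omega>. (norm (W (Suc k) \<omega> - target k))^2 \<partial>M)
      \<le> (\<integral>\<omega>. (norm (A \<omega> + \<gamma> k *\<^sub>R \<epsilon>1 k \<omega> - \<eta> k *\<^sub>R \<epsilon>2 k \<omega>))^2 \<partial>M)"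
  proof (rule integral_mono[OF iterate_sq_integrable noise(1)])
    fix \<omega> assume "\<omega> \<in> space M"
    then show "(norm (W (Suc k) \<omega> - target k))^2
        \<le> (norm (A \<omega> + \<gamma> k *\<^sub>R \<epsilon>1 k \<omega> - \<eta> k *\<^sub>R \<epsilon>2 k \<omega>))^2"
      using W_Suc_dist_le[OF k _ target_in] by (simp add: A_def power_mono)
  qed (use k in simp)
  also have "\<dots> \<le> (\<integral>\<omega>. (norm (A \<omega>))^2 \<partial>M) + (\<gamma> k)^2 * \<sigma>1 + (\<eta> k)^2 * \<sigma>2"
    by (rule noise(2))
  finally show ?thesis using contr by simp
qed

lemma tracking_error_step:
  assumes k: "\<kappa> \<le> k" and target_in: "target k \<in> P"
    and step: "\<eta> k * \<mu> \<le> 1" and small: "\<eta> k * (Lc + \<gamma> k / \<eta> k * Lnorm)^2 \<le> \<mu>"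
    and drift: "norm (target (Suc k) - target k) \<le> d"
  shows "tracking_error (Suc k)
    \<le> (1 - \<eta> k * \<mu> / 2) * tracking_error k + 2 * ((\<gamma> k)^2 * \<sigma>1 + (\<eta> k)^2 * \<sigma>2)
       + 3 * d^2 / (\<eta> k * \<mu>)"
proof -
  interpret prob_space M by (rule prob)
  define c where "c = \<eta> k * \<mu> / 2"
  have c: "0 < c" using eta_pos[of k] mu_pos by (simp add: c_def)
  have d: "(norm (target k - target (Suc k)))^2 \<le> d^2"
    using drift norm_minus_commute[of "target k" "target (Suc k)"] by (simp add: power_mono)
  have pointwise: "(norm (W (Suc k) \<omega> - target (Suc k)))^2
      \<le> (1 + c) * (norm (W (Suc k) \<omega> - target k))^2 + (1 + 1 / c) * d^2" for \<omega>
  proof -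
    have "(norm (W (Suc k) \<omega> - target (Suc k)))^2
        = (norm ((W (Suc k) \<omega> - target k) + (target k - target (Suc k))))^2"
      by (simp add: algebra_simps)
    also have "\<dots> \<le> (1 + c) * (norm (W (Suc k) \<omega> - target k))^2
        + (1 + 1 / c) * (norm (target k - target (Suc k)))^2"
      by (rule norm_add_sq_le_weighted[OF c])
    also have "(1 + 1 / c) * (norm (target k - target (Suc k)))^2 \<le> (1 + 1 / c) * d^2"
      using d c by (intro mult_left_mono) auto
    finally show ?thesis by simp
  qed
  have int: "integrable M (\<lambda>\<omega>. (norm (W (Suc k) \<omega> - V))^2)" for V
    using k by (intro iterate_sq_integrable) simp
  have "tracking_error (Suc k)
      \<le> (\<integral>\<omega>. (1 + c) * (norm (W (Suc k) \<omega> - target k))^2 + (1 + 1 / c) * d^2 \<partial>M)"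
    unfolding tracking_error_def by (rule integral_mono) (use int pointwise in auto)
  also have "\<dots> = (1 + c) * (\<integral>\<omega>. (norm (W (Suc k) \<omega> - target k))^2 \<partial>M) + (1 + 1 / c) * d^2"
    using int by (simp add: prob_space)
  also have "\<dots> \<le> (1 + c) * ((1 - \<eta> k * \<mu>) * tracking_error k + ((\<gamma> k)^2 * \<sigma>1 + (\<eta> k)^2 * \<sigma>2))
      + (1 + 1 / c) * d^2"
    using expected_sq_dist_after_step[OF k target_in small] c by (simp add: mult_left_mono add_ac)
  finally show ?thesis unfolding c_def
    using eta_pos[of k] mu_pos tracking_error_nonneg sigma1_nonneg sigma2_nonneg
    by (intro absorb_half_contraction step) (auto simp: add_nonneg_nonneg)
qed

lemma step_error_terms_le:
  "2 * ((\<gamma> k)^2 * \<sigma>1 + (\<eta> k)^2 * \<sigma>2) + 3 * (c / (u k)^5)^2 / (\<eta> k * \<mu>)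
    \<le> (2 * (\<gamma>0^2 * \<sigma>1 + \<eta>0^2 * \<sigma>2) + 3 * c^2 / (\<eta>0 * \<mu>)) / (u k)^6"
proof -
  have u: "0 < u k" "1 \<le> u k" by (rule u_pos, rule u_ge_1)
  have "(\<eta> k)^2 = \<eta>0^2 / (u k)^6 / (u k)^2"
    by (simp add: eta_eq power_divide flip: power_mult power_add)
  also have "\<dots> \<le> \<eta>0^2 / (u k)^6 / 1"
    using u by (intro divide_left_mono) (auto simp: one_le_power)
  finally have "(\<eta> k)^2 \<le> \<eta>0^2 / (u k)^6" by simp
  then have "(\<eta> k)^2 * \<sigma>2 \<le> \<eta>0^2 / (u k)^6 * \<sigma>2"
    using sigma2_nonneg by (rule mult_right_mono)
  moreover have "(\<gamma> k)^2 = \<gamma>0^2 / (u k)^6"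
    by (simp add: gamma_eq power_divide flip: power_mult)
  moreover have "3 * (c / (u k)^5)^2 / (\<eta> k * \<mu>) = 3 * c^2 / (\<eta>0 * \<mu>) / (u k)^6"
    using u eta0_pos mu_pos by (simp add: eta_eq field_simps power_divide flip: power_mult power_add)
  ultimately show ?thesis
    by (simp add: add_divide_distrib distrib_left add_mono)
qed

lemma tracking_error_recursion:
  "\<exists>C\<ge>0. eventually (\<lambda>k. (\<eta>0 * \<mu> / 2) / (u k)^4 \<le> 1 \<and>
     tracking_error (Suc k) \<le> (1 - (\<eta>0 * \<mu> / 2) / (u k)^4) * tracking_error k + C / (u k)^6)
   sequentially"
proof -
  obtain c where drift: "\<And>k. norm (target (Suc k) - target k) \<le> c / (u k)^5"
    using target_drift by blast
  define C where "C = 2 * (\<gamma>0^2 * \<sigma>1 + \<eta>0^2 * \<sigma>2) + 3 * c^2 / (\<eta>0 * \<mu>)"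
  have "0 \<le> C"
    using sigma1_nonneg sigma2_nonneg eta0_pos mu_pos by (simp add: C_def)
  moreover have "eventually (\<lambda>k. (\<eta>0 * \<mu> / 2) / (u k)^4 \<le> 1 \<and>
     tracking_error (Suc k) \<le> (1 - (\<eta>0 * \<mu> / 2) / (u k)^4) * tracking_error k + C / (u k)^6)
   sequentially"
    using eventually_ge_at_top[of \<kappa>] eventually_target_in_P eventually_step_small
  proof eventually_elim
    case (elim k)
    have half: "\<eta> k * \<mu> / 2 = (\<eta>0 * \<mu> / 2) / (u k)^4" by (simp add: eta_eq)
    have "(\<eta>0 * \<mu> / 2) / (u k)^4 \<le> 1" unfolding half[symmetric] using elim by simp
    then show ?case
      using elim tracking_error_step[OF _ _ _ _ drift, of k] step_error_terms_le[of k c]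
      by (auto simp: half C_def)
  qed
  ultimately show ?thesis by blast
qed

lemma tracking_error_decay: "\<exists>K. eventually (\<lambda>k. tracking_error k \<le> K / (u k)^2) sequentially"
proof -
  obtain C k0 where C: "0 \<le> C" and rec: "\<forall>k\<ge>k0. (\<eta>0 * \<mu> / 2) / (u k)^4 \<le> 1 \<and>
      tracking_error (Suc k) \<le> (1 - (\<eta>0 * \<mu> / 2) / (u k)^4) * tracking_error k + C / (u k)^6"
    using tracking_error_recursion unfolding eventually_sequentially by blast
  have "5 / 8 * \<delta> \<le> \<eta>0 * \<mu> / 2" using delta_le by (simp add: mult_ac)
  then obtain K where "\<forall>k\<ge>k0. tracking_error k \<le> K / (u k)^2"
    using recursion_bound[of "\<eta>0 * \<mu> / 2" C k0 tracking_error] C rec by blast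
  then show ?thesis unfolding eventually_sequentially by blast
qed

lemma expected_sq_dist_eventually:
  "\<exists>C. eventually (\<lambda>k. (\<integral>\<omega>. (norm (W k \<omega> - vec w))^2 \<partial>M) \<le> C / (u k)^2) sequentially"
proof -
  interpret prob_space M by (rule prob)
  obtain K where K: "eventually (\<lambda>k. tracking_error k \<le> K / (u k)^2) sequentially"
    using tracking_error_decay by blast
  define c where "c = (1 + Lc / \<mu>) * norm (Ph (vec w)) / (\<gamma>0 / \<eta>0 * \<rho> 2)"
  have "eventually (\<lambda>k. (\<integral>\<omega>. (norm (W k \<omega> - vec w))^2 \<partial>M) \<le> (2 * K + 2 * c^2) / (u k)^2)
      sequentially"
    using K eventually_ge_at_top[of \<kappa>]
  proof eventually_elim
    case (elim k)
    have "(norm (target k - vec w))^2 \<le> (c / u k)^2"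
      using target_dist[of k] by (intro power_mono) (simp_all add: c_def)
    then have target: "(norm (target k - vec w))^2 \<le> c^2 / (u k)^2" by (simp add: power_divide)
    have "(\<integral>\<omega>. (norm (W k \<omega> - vec w))^2 \<partial>M)
        \<le> (\<integral>\<omega>. 2 * (norm (W k \<omega> - target k))^2 + 2 * (norm (target k - vec w))^2 \<partial>M)"
    proof (rule integral_mono)
      fix \<omega>
      show "(norm (W k \<omega> - vec w))^2 \<le> 2 * (norm (W k \<omega> - target k))^2 + 2 * (norm (target k - vec w))^2"
        using norm_add_sq_le_weighted[of 1 "W k \<omega> - target k" "target k - vec w"] by simp
    qed (use elim iterate_sq_integrable in auto)
    also have "\<dots> = 2 * tracking_error k + 2 * (norm (target k - vec w))^2"
      using iterate_sq_integrable[OF elim(2)] by (simp add: tracking_error_def prob_space)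
    also have "\<dots> \<le> (2 * K + 2 * c^2) / (u k)^2"
      using elim(1) target by (simp add: add_divide_distrib)
    finally show ?case .
  qed
  then show ?thesis by blast
qed

lemma expected_sq_dist_bounded: "\<exists>B. \<forall>k\<ge>\<kappa>. (\<integral>\<omega>. (norm (W k \<omega> - vec w))^2 \<partial>M) \<le> B"
proof -
  interpret prob_space M by (rule prob)
  obtain R where R: "\<forall>x\<in>P. norm x \<le> R" using P_bounded bounded_iff by blast
  have "(\<integral>\<omega>. (norm (W k \<omega> - vec w))^2 \<partial>M) \<le> (R + norm (vec w :: 'a^'n))^2" if k: "\<kappa> \<le> k" for k
  proof -
    have "(\<integral>\<omega>. (norm (W k \<omega> - vec w))^2 \<partial>M) \<le> (\<integral>\<omega>. (R + norm (vec w :: 'a^'n))^2 \<partial>M)"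
    proof (rule integral_mono)
      fix \<omega> assume "\<omega> \<in> space M"
      then have "norm (W k \<omega> - vec w) \<le> R + norm (vec w :: 'a^'n)"
        using R iterate_in_P[OF k] by (smt (verit) norm_triangle_ineq4)
      then show "(norm (W k \<omega> - vec w))^2 \<le> (R + norm (vec w :: 'a^'n))^2"
        by (simp add: power_mono)
    qed (use iterate_sq_integrable[OF k] in auto)
    then show ?thesis by (simp add: prob_space)
  qed
  then show ?thesis by blast
qed

theorem expected_sq_dist_decay:
  "\<exists>C. \<forall>k\<ge>\<kappa>. (\<integral>\<omega>. (norm (W k \<omega> - vec w))^2 \<partial>M) \<le> C / (u k)^2"
proof -
  obtain C k0 where C: "\<And>k. k0 \<le> k \<Longrightarrow> (\<integral>\<omega>. (norm (W k \<omega> - vec w))^2 \<partial>M) \<le> C / (u k)^2"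
    using expected_sq_dist_eventually unfolding eventually_sequentially by blast
  obtain B where B: "\<And>k. \<kappa> \<le> k \<Longrightarrow> (\<integral>\<omega>. (norm (W k \<omega> - vec w))^2 \<partial>M) \<le> B"
    using expected_sq_dist_bounded by blast
  have "(\<integral>\<omega>. (norm (W k \<omega> - vec w))^2 \<partial>M) \<le> max C (B * (u k0)^2) / (u k)^2" if k: "\<kappa> \<le> k" for k
  proof (cases "k0 \<le> k")
    case True
    then show ?thesis
      using C[OF True] u_pos[of k] by (smt (verit) divide_right_mono zero_le_power2)
  next
    case False
    have "B \<le> B * (u k0)^2 / (u k)^2"
    proof -
      have B0: "0 \<le> B" using B[OF k] by (smt (verit) integral_nonneg_AE AE_I2 zero_le_power2)
      have "(u k)^2 \<le> (u k0)^2" using False u_mono[of k k0] u_pos[of k] by (simp add: power_mono)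
      then show ?thesis using B0 u_pos[of k] by (simp add: field_simps mult_left_mono)
    qed
    then show ?thesis
      using B[OF k] u_pos[of k] by (smt (verit) divide_right_mono zero_le_power2)
  qed
  then show ?thesis by blast
qed

end

lemma closed_prodset: "closed S \<Longrightarrow> closed (prodset S :: ('a::real_normed_vector^'n::finite) set)"
proof -
  assume S: "closed S"
  have "prodset S = (\<Inter>i. UNIV \<inter> (\<lambda>W::'a^'n. W $ i) -` S)" by (auto simp: prodset_def)
  moreover have "closed (UNIV \<inter> (\<lambda>W::'a^'n. W $ i) -` S)" for i
    by (rule continuous_closed_preimage) (auto intro: continuous_on_component S continuous_on_id)
  ultimately show ?thesis by auto
qed

lemma convex_prodset: "convex S \<Longrightarrow> convex (prodset S :: ('a::real_normed_vector^'n::finite) set)"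
  unfolding convex_def prodset_def by auto

lemma bounded_prodset:
  assumes "bounded S" shows "bounded (prodset S :: ('a::real_inner^'n::finite) set)"
proof -
  obtain B where B: "\<forall>x\<in>S. norm x \<le> B" using assms bounded_iff by blast
  have "norm W \<le> sqrt (real CARD('n) * B^2)" if "W \<in> prodset S" for W :: "'a^'n"
  proof -
    have "(norm W)^2 \<le> (\<Sum>i\<in>(UNIV::'n set). B^2)"
      unfolding norm_vec_sq using that B by (intro sum_mono power_mono) (auto simp: prodset_def)
    then show ?thesis by (simp add: real_le_rsqrt)
  qed
  then show ?thesis unfolding bounded_iff by blast
qed

lemma vec_interior_prodset:
  assumes "w \<in> interior S" shows "(vec w :: 'a::real_normed_vector^'n::finite) \<in> interior (prodset S)"
proof -
  obtain e where e: "0 < e" "ball w e \<subseteq> S" using assms mem_interior by blast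
  have "ball (vec w :: 'a^'n) e \<subseteq> prodset S"
  proof
    fix W :: "'a^'n" assume "W \<in> ball (vec w) e"
    then have "norm (W $ i - w) < e" for i
      using Finite_Cartesian_Product.norm_nth_le[of "W - vec w" i] by (simp add: dist_norm norm_minus_commute vec_def)
    then show "W \<in> prodset S" using e(2) by (auto simp: prodset_def dist_norm norm_minus_commute)
  qed
  then show ?thesis using e(1) mem_interior by blast
qed

theorem mainTheorem3:
  fixes f :: "'n::finite \<Rightarrow> 'a::euclidean_space \<Rightarrow> real"
    and grad :: "'n \<Rightarrow> 'a \<Rightarrow> 'a"
    and \<mu> Lc :: real
    and wstar :: 'a and Wset :: "'a set" and \<zeta> nablastar :: real
    and Lm :: "real^'n^'n" and \<rho> :: "nat \<Rightarrow> real"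
    and \<gamma>0 \<eta>0 \<delta> :: real and \<gamma> \<eta> :: "nat \<Rightarrow> real"
    and gradG :: "nat \<Rightarrow> 'a^'n \<Rightarrow> 'a^'n"
    and M :: "'b measure" and Fk :: "nat \<Rightarrow> 'b measure" and \<kappa> :: nat
    and \<epsilon>1 \<epsilon>2 :: "nat \<Rightarrow> 'b \<Rightarrow> 'a^'n" and \<Sigma>1 \<Sigma>2 :: real
    and Wseq :: "nat \<Rightarrow> 'b \<Rightarrow> 'a^'n"
  assumes N2: "CARD('n) \<ge> 2"
    and mu_pos: "0 < \<mu>" and mu_le_L: "\<mu> \<le> Lc"
    and sconv: "\<forall>i. strongly_convex \<mu> (f i)"
    and smooth: "\<forall>i. smooth_with_grad Lc (f i) (grad i)"
    and minimizer: "\<forall>w. (\<Sum>i\<in>UNIV. f i wstar) / real CARD('n) \<le> (\<Sum>i\<in>UNIV. f i w) / real CARD('n)"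
    and Wset_ne: "Wset \<noteq> {}" and Wset_closed: "closed Wset" and Wset_convex: "convex Wset"
    and Wset_bounded: "bounded Wset" and wstar_int: "wstar \<in> interior Wset"
    and zeta_def: "\<zeta> = (INF w\<in>frontier Wset. norm (w - wstar))"
    and nablastar_def: "nablastar = Max (range (\<lambda>i. norm (grad i wstar)))"
    and lap: "laplacian_matrix Lm"
    and eig: "ordered_eigenvalues Lm \<rho>"
    and rho2_pos: "\<rho> 2 > 0"
    and gamma0_pos: "\<gamma>0 > 0" and eta0_pos: "\<eta>0 > 0"
    and delta_pos: "0 < \<delta>" and delta_le: "\<delta> \<le> 4 / 5 * \<mu> * \<eta>0"
    and gamma_def: "\<forall>k. \<gamma> k = \<gamma>0 * (1 + \<delta> * real k) powr (- 3 / 4)"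
    and eta_def: "\<forall>k. \<eta> k = \<eta>0 / (1 + \<delta> * real k)"
    and kappa1: "\<forall>k\<ge>\<kappa>. \<eta> k * (\<mu> + Lc) + \<gamma> k * \<rho> CARD('n) \<le> 2"
    and kappa2: "\<forall>k\<ge>\<kappa>. \<eta> k * (sqrt (real CARD('n)) * nablastar * Lc) \<le> \<gamma> k * (\<zeta> * \<mu> * \<rho> 2)"
    and gradG: "\<forall>k W. GDERIV (Gfun f Lm (\<gamma> k) (\<eta> k)) W :> gradG k W"
    and prob: "prob_space M"
    and filt: "filtration (space M) Fk"
    and subalg: "\<forall>k. subalgebra M (Fk k)"
    and W0_meas: "Wseq \<kappa> \<in> borel_measurable (Fk \<kappa>)"
    and W0_in: "\<forall>\<omega>\<in>space M. Wseq \<kappa> \<omega> \<in> prodset Wset"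
    and iter: "\<forall>k\<ge>\<kappa>. \<forall>\<omega>\<in>space M. Wseq (Suc k) \<omega> =
        closest_point (prodset Wset)
          (Wseq k \<omega> - \<eta> k *\<^sub>R gradG k (Wseq k \<omega>) + \<gamma> k *\<^sub>R \<epsilon>1 k \<omega> - \<eta> k *\<^sub>R \<epsilon>2 k \<omega>)"
    and eps1_meas: "\<forall>k\<ge>\<kappa>. \<epsilon>1 k \<in> borel_measurable (Fk (Suc k))"
    and eps2_meas: "\<forall>k\<ge>\<kappa>. \<epsilon>2 k \<in> borel_measurable (Fk (Suc k))"
    and eps1_mean: "\<forall>k\<ge>\<kappa>. \<forall>b\<in>Basis. AE \<omega> in M. real_cond_exp M (Fk k) (\<lambda>x. \<epsilon>1 k x \<bullet> b) \<omega> = 0"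
    and eps2_mean: "\<forall>k\<ge>\<kappa>. \<forall>b\<in>Basis. AE \<omega> in M. real_cond_exp M (Fk k) (\<lambda>x. \<epsilon>2 k x \<bullet> b) \<omega> = 0"
    and eps_orth: "\<forall>k\<ge>\<kappa>. AE \<omega> in M. real_cond_exp M (Fk k) (\<lambda>x. \<epsilon>1 k x \<bullet> \<epsilon>2 k x) \<omega> = 0"
    and Sigma1_nn: "\<Sigma>1 \<ge> 0" and Sigma2_nn: "\<Sigma>2 \<ge> 0"
    and eps1_var: "\<forall>k\<ge>\<kappa>. AE \<omega> in M.
        nn_cond_exp M (Fk k) (\<lambda>x. ennreal ((norm (\<epsilon>1 k x))\<^sup>2)) \<omega> \<le> ennreal (real CARD('n) * \<Sigma>1)"
    and eps2_var: "\<forall>k\<ge>\<kappa>. AE \<omega> in M.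
        nn_cond_exp M (Fk k) (\<lambda>x. ennreal ((norm (\<epsilon>2 k x))\<^sup>2)) \<omega> \<le> ennreal (real CARD('n) * \<Sigma>2)"
  shows "\<exists>C::real. \<forall>k\<ge>\<kappa>.
    (\<integral>\<omega>. (1 / real CARD('n)) * (\<Sum>i\<in>UNIV. (norm (Wseq k \<omega> $ i - wstar))\<^sup>2) \<partial>M)
      \<le> C / sqrt (real k + 1)"
proof -
  define u where "u k = (1 + \<delta> * real k) powr (1 / 4)" for k
  interpret quartic_schedule u \<delta>
    unfolding u_def by (rule quartic_schedule_powr[OF delta_pos])
  have gd: "\<forall>i z. GDERIV (f i) z :> grad i z" and lip: "\<forall>i. Lc-lipschitz_on UNIV (grad i)"
    using smooth unfolding smooth_with_grad_def by auto
  have sum0: "(\<Sum>i\<in>UNIV. block_grad grad (vec wstar) $ i) = 0"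
    using minimizer_grad_sum_zero[OF gd] minimizer by (simp add: block_grad_def divide_le_cancel)
  have W_step: "Wseq (Suc k) \<omega> = closest_point (prodset Wset) (Wseq k \<omega>
      - \<eta> k *\<^sub>R (block_grad grad (Wseq k \<omega>) + (\<gamma> k / \<eta> k) *\<^sub>R Lhat Lm (Wseq k \<omega>))
      + \<gamma> k *\<^sub>R \<epsilon>1 k \<omega> - \<eta> k *\<^sub>R \<epsilon>2 k \<omega>)" if "\<kappa> \<le> k" "\<omega> \<in> space M" for k \<omega>
    using iter that Gfun_gradient_eq[OF lap gd] gradG by metis
  have eta_u: "\<eta> k = \<eta>0 / (u k)^4" for k
    using eta_def by (simp add: u_pow4)
  have gamma_u: "\<gamma> k = \<gamma>0 / (u k)^3" for k
    using gamma_def powr_neg_three_quarters[of "1 + \<delta> * real k"] delta_pos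
    by (simp add: u_def add_pos_nonneg)
  interpret M: prob_space M by (rule prob)
  interpret penalized_sgd "block_grad grad" Lm \<rho> \<mu> Lc u \<delta> "prodset Wset" wstar \<eta>0 \<gamma>0 \<eta> \<gamma>
      M Fk \<kappa> \<epsilon>1 \<epsilon>2 "real CARD('n) * \<Sigma>1" "real CARD('n) * \<Sigma>2" Wseq
    by unfold_locales
      (fact block_grad_strongly_monotone[OF sconv gd] block_grad_lipschitz[OF lip] lap eig rho2_pos
        mu_pos mu_le_L closed_prodset[OF Wset_closed] convex_prodset[OF Wset_convex]
        bounded_prodset[OF Wset_bounded] vec_interior_prodset[OF wstar_int] sum0 eta0_pos gamma0_pos
        eta_u gamma_u delta_le prob subalg[rule_format] filtration_subalgebra_Suc[OF filt]
        W0_meas W0_in[rule_format] W_step eps1_meas[rule_format] eps2_meas[rule_format]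
        mult_nonneg_nonneg[OF of_nat_0_le_iff Sigma1_nn] mult_nonneg_nonneg[OF of_nat_0_le_iff Sigma2_nn]
        M.sigma_finite_countable M.finite_emeasure_space M.emeasure_space_1
      | use eps1_mean eps2_mean eps_orth eps1_var eps2_var in blast)+
  obtain C where C: "\<forall>k\<ge>\<kappa>. (\<integral>\<omega>. (norm (Wseq k \<omega> - vec wstar))^2 \<partial>M) \<le> C / (u k)^2"
    using expected_sq_dist_decay by blast
  have "(\<integral>\<omega>. (1 / real CARD('n)) * (\<Sum>i\<in>UNIV. (norm (Wseq k \<omega> $ i - wstar))\<^sup>2) \<partial>M)
      \<le> (C / real CARD('n)) / (u k)^2" if "\<kappa> \<le> k" for k
  proof -
    have "(\<integral>\<omega>. (1 / real CARD('n)) * (\<Sum>i\<in>UNIV. (norm (Wseq k \<omega> $ i - wstar))\<^sup>2) \<partial>M)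
        = (\<integral>\<omega>. (norm (Wseq k \<omega> - vec wstar))^2 \<partial>M) / real CARD('n)"
      by (simp add: norm_vec_sq)
    also have "\<dots> \<le> (C / (u k)^2) / real CARD('n)"
      using C that by (intro divide_right_mono) auto
    finally show ?thesis by (simp add: mult.commute)
  qed
  then show ?thesis using div_u_sq_le_div_sqrt by blast
qed

end
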